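(* Let $X,X_1,X_2,\dots$ be random variables in a sub-linear expectation space $(\Omega,\mathscr H,\hat{\mathbb E})$ with $\{X_n\}$ independent, $X_n\overset d=X$ for all $n$, and $\hat{\mathbb E}[X]=\hat{\mathcal E}[X]=0$. Let $S_n=\sum_{i=1}^nX_i$, $V_n^2=\sum_{i=1}^nX_i^2$, $l(x)=\hat{\mathbb E}[X^2\wedge x^2]$, and assume: (I) $\mathbb V(|X|\ge x)=o(x^{-2}l(x))$ as $x\to\infty$; (II) $\limsup_{x\to\infty}\hat{\mathbb E}[X^2\wedge x^2]/\hat{\mathcal E}[X^2\wedge x^2]<\infty$; (III) $\hat{\mathbb E}[(|X|-c)^+]\to0$ as $c\to\infty$; (IV) $x_n\to\infty$ and $x_n=o(\sqrt n)$. Let $b_0=\inf\{x\ge0:l(x)>0\}$ and $z_n=\inf\{s\ge b_0+1: l(s)/s^2\le x_n^2/n\}$. Then for every $0<\delta<1$, as $n\to\infty$, $$\mathbb V\big(S_n\ge x_nV_n,\ \delta nl(z_n)\le V_n^2\le 9nl(z_n)\big)\le\exp\Big\{-\frac{x_n^2}{2}+o(x_n^2)\Big\}.$$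
   Context: Sub-linear expectation space: $\mathscr H$ is a linear space of real functions on a measurable space $(\Omega,\mathcal F)$, closed under $\varphi(X_1,\dots,X_n)$ for $\varphi$ bounded continuous or locally Lipschitz with polynomial growth; $\hat{\mathbb E}:\mathscr H\to[-\infty,\infty]$ is monotone, constant preserving, sub-additive and positively homogeneous. $\hat{\mathcal E}[X]=-\hat{\mathbb E}[-X]$; $\mathbb V(A)=\inf\{\hat{\mathbb E}[\xi]:I_A\le\xi,\xi\in\mathscr H\}$. Independence: $\mathbf Y$ is independent of $\mathbf X$ if $\hat{\mathbb E}[\varphi(\mathbf X,\mathbf Y)]=\hat{\mathbb E}[\hat{\mathbb E}[\varphi(\mathbf x,\mathbf Y)]|_{\mathbf x=\mathbf X}]$ for all locally Lipschitz $\varphi$ of polynomial growth (whenever the relevant expectations are finite); $\{X_n\}$ is independent if $X_{i+1}$ is independent of $(X_1,\dots,X_i)$ for each $i$. $X_n\overset d=X$ means $\hat{\mathbb E}[\varphi(X_n)]=\hat{\mathbb E}[\varphi(X)]$ for all such $\varphi$. $a\wedge b=\min(a,b)$. *)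

theory Defs
  imports "HOL-Analysis.Analysis" "HOL-Library.Landau_Symbols"
begin

definition vnorm :: "real list \<Rightarrow> real" where
  "vnorm xs = sqrt (sum_list (map (\<lambda>x. x\<^sup>2) xs))"

definition vdiff :: "real list \<Rightarrow> real list \<Rightarrow> real list" where
  "vdiff xs ys = map2 (-) xs ys"

definition lLip :: "nat \<Rightarrow> (real list \<Rightarrow> real) \<Rightarrow> bool" where
  "lLip n \<phi> \<longleftrightarrow> (\<exists>C (m::nat). \<forall>x y. length x = n \<longrightarrow> length y = n \<longrightarrow>
      \<bar>\<phi> x - \<phi> y\<bar> \<le> C * (1 + vnorm x ^ m + vnorm y ^ m) * vnorm (vdiff x y))"

definition bcont :: "nat \<Rightarrow> (real list \<Rightarrow> real) \<Rightarrow> bool" where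
  "bcont n \<phi> \<longleftrightarrow> (\<exists>B. \<forall>x. length x = n \<longrightarrow> \<bar>\<phi> x\<bar> \<le> B) \<and>
     (\<forall>x. length x = n \<longrightarrow> (\<forall>e>0. \<exists>d>0. \<forall>y. length y = n \<longrightarrow>
         vnorm (vdiff y x) < d \<longrightarrow> \<bar>\<phi> y - \<phi> x\<bar> < e))"

definition vec :: "('w \<Rightarrow> real) list \<Rightarrow> 'w \<Rightarrow> real list" where
  "vec Xs \<omega> = map (\<lambda>f. f \<omega>) Xs"

definition sublinear_expectation_space ::
  "('w \<Rightarrow> real) set \<Rightarrow> (('w \<Rightarrow> real) \<Rightarrow> ereal) \<Rightarrow> bool" where
  "sublinear_expectation_space H E \<longleftrightarrow>
     (\<forall>c. (\<lambda>_. c) \<in> H) \<and>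
     (\<forall>X\<in>H. \<forall>Y\<in>H. (\<lambda>\<omega>. X \<omega> + Y \<omega>) \<in> H) \<and>
     (\<forall>X\<in>H. \<forall>c. (\<lambda>\<omega>. c * X \<omega>) \<in> H) \<and>
     (\<forall>Xs \<phi>. set Xs \<subseteq> H \<longrightarrow> (bcont (length Xs) \<phi> \<or> lLip (length Xs) \<phi>) \<longrightarrow>
         (\<lambda>\<omega>. \<phi> (vec Xs \<omega>)) \<in> H) \<and>
     (\<forall>X\<in>H. \<forall>Y\<in>H. (\<forall>\<omega>. X \<omega> \<le> Y \<omega>) \<longrightarrow> E X \<le> E Y) \<and>
     (\<forall>c. E (\<lambda>_. c) = ereal c) \<and>
     (\<forall>X\<in>H. \<forall>Y\<in>H. E (\<lambda>\<omega>. X \<omega> + Y \<omega>) \<le> E X + E Y) \<and>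
     (\<forall>X\<in>H. \<forall>c>0. E (\<lambda>\<omega>. c * X \<omega>) = ereal c * E X)"

definition lowerE :: "(('w \<Rightarrow> real) \<Rightarrow> ereal) \<Rightarrow> ('w \<Rightarrow> real) \<Rightarrow> ereal" where
  "lowerE E X = - E (\<lambda>\<omega>. - X \<omega>)"

definition capV :: "('w \<Rightarrow> real) set \<Rightarrow> (('w \<Rightarrow> real) \<Rightarrow> ereal) \<Rightarrow> 'w set \<Rightarrow> ereal" where
  "capV H E A = Inf {E \<xi> | \<xi>. \<xi> \<in> H \<and> (\<forall>\<omega>. indicator A \<omega> \<le> \<xi> \<omega>)}"

definition indep_of ::
  "('w \<Rightarrow> real) set \<Rightarrow> (('w \<Rightarrow> real) \<Rightarrow> ereal) \<Rightarrow> ('w \<Rightarrow> real) \<Rightarrow> ('w \<Rightarrow> real) list \<Rightarrow> bool" where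
  "indep_of H E Y Xs \<longleftrightarrow>
     (\<forall>\<phi>. lLip (Suc (length Xs)) \<phi> \<longrightarrow>
        (\<forall>x. length x = length Xs \<longrightarrow> \<bar>E (\<lambda>\<omega>. \<phi> (x @ [Y \<omega>]))\<bar> \<noteq> \<infinity>) \<longrightarrow>
        E (\<lambda>\<omega>. \<phi> (vec Xs \<omega> @ [Y \<omega>])) =
        E (\<lambda>\<omega>. real_of_ereal (E (\<lambda>\<omega>'. \<phi> (vec Xs \<omega> @ [Y \<omega>'])))))"

definition indep_seq ::
  "('w \<Rightarrow> real) set \<Rightarrow> (('w \<Rightarrow> real) \<Rightarrow> ereal) \<Rightarrow> (nat \<Rightarrow> 'w \<Rightarrow> real) \<Rightarrow> bool" where
  "indep_seq H E X \<longleftrightarrow> (\<forall>i\<ge>1. indep_of H E (X (i+1)) (map X [1..<i+1]))"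

definition ident_distr ::
  "(('w \<Rightarrow> real) \<Rightarrow> ereal) \<Rightarrow> ('w \<Rightarrow> real) \<Rightarrow> ('w \<Rightarrow> real) \<Rightarrow> bool" where
  "ident_distr E Y X \<longleftrightarrow> (\<forall>\<phi>. lLip 1 \<phi> \<longrightarrow> E (\<lambda>\<omega>. \<phi> [Y \<omega>]) = E (\<lambda>\<omega>. \<phi> [X \<omega>]))"

end

theory Submission
  imports Defs
begin

text \<open>For \<open>\<lambda> > 0\<close> the products \<open>\<Prod>j=1..n. exp (\<lambda> X\<^sub>j - \<lambda>\<^sup>2 X\<^sub>j\<^sup>2 / 2) = exp (\<lambda> S\<^sub>n - \<lambda>\<^sup>2 V\<^sub>n\<^sup>2 / 2)\<close>
  have sub-linear expectation \<open>(E exp (\<lambda> X - \<lambda>\<^sup>2 X\<^sup>2 / 2))\<^sup>n\<close> by independence, and an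
  elementary bound on \<open>exp (y - y\<^sup>2/2)\<close>, together with conditions (I) and (III) for the tail of \<open>X\<close>,
  gives \<open>E exp (\<lambda> X - \<lambda>\<^sup>2 X\<^sup>2 / 2) \<le> 1 + o(x\<^sub>n\<^sup>2 / n)\<close> for all \<open>\<lambda>\<close> of order \<open>x\<^sub>n / \<surd>(n l(z\<^sub>n))\<close>.
  On the event, \<open>V\<^sub>n\<close> lies in one of finitely many geometric shells \<open>[b, (1+\<rho>) b]\<close>, and on such a
  shell \<open>\<lambda> = x\<^sub>n / b\<close> makes \<open>\<lambda> S\<^sub>n - \<lambda>\<^sup>2 V\<^sub>n\<^sup>2 / 2 \<ge> x\<^sub>n\<^sup>2 (1 - \<rho>\<^sup>2) / 2\<close>. Chebyshev's inequality on each
  shell and a union bound over the shells give \<open>exp (- x\<^sub>n\<^sup>2 (1 - \<rho>\<^sup>2) / 2 + o(x\<^sub>n\<^sup>2))\<close> for every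
  fixed \<open>\<rho>\<close>, and letting \<open>\<rho>\<close> tend to \<open>0\<close> along a diagonal yields the \<open>o(x\<^sub>n\<^sup>2)\<close> correction.\<close>

lemma nth_le_vnorm: "j < length x \<Longrightarrow> \<bar>x ! j\<bar> \<le> vnorm x"
proof -
  assume j: "j < length x"
  have "(x ! j)\<^sup>2 \<le> sum_list (map (\<lambda>a. a\<^sup>2) x)"
    using j by (intro member_le_sum_list) auto
  then show ?thesis
    unfolding vnorm_def by (metis real_sqrt_abs real_sqrt_le_mono)
qed

lemma nth_diff_le_vnorm_vdiff:
  "j < length x \<Longrightarrow> length x = length y \<Longrightarrow> \<bar>x ! j - y ! j\<bar> \<le> vnorm (vdiff x y)"
  using nth_le_vnorm[of j "vdiff x y"] by (simp add: vdiff_def)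

lemma lLip_one_of_scalar:
  assumes "\<And>a b. \<bar>\<phi> a - \<phi> b\<bar> \<le> C * (1 + \<bar>a\<bar>^m + \<bar>b\<bar>^m) * \<bar>a - b\<bar>"
  shows "lLip 1 (\<lambda>v. \<phi> (hd v))"
  unfolding lLip_def
proof (intro exI allI impI)
  fix x y :: "real list" assume "length x = 1" "length y = 1"
  then obtain a b where "x = [a]" "y = [b]"
    by (metis One_nat_def length_0_conv length_Suc_conv)
  then show "\<bar>\<phi> (hd x) - \<phi> (hd y)\<bar> \<le> C * (1 + vnorm x ^ m + vnorm y ^ m) * vnorm (vdiff x y)"
    using assms[of a b] by (simp add: vnorm_def vdiff_def)
qed

lemma prod_list_map_bounds:
  fixes g :: "real \<Rightarrow> real"
  assumes "\<And>a. 0 \<le> g a" "\<And>a. g a \<le> M"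
  shows "0 \<le> prod_list (map g xs)" "prod_list (map g xs) \<le> M ^ length xs"
proof -
  have "0 \<le> prod_list (map g xs) \<and> prod_list (map g xs) \<le> M ^ length xs"
    using order_trans[OF assms(1) assms(2)]
    by (induction xs) (auto intro!: mult_mono simp: assms)
  then show "0 \<le> prod_list (map g xs)" "prod_list (map g xs) \<le> M ^ length xs" by auto
qed

lemma prod_list_map_diff_le:
  fixes g :: "real \<Rightarrow> real"
  assumes "length xs = length ys" "\<And>a. 0 \<le> g a" "\<And>a. g a \<le> M" "1 \<le> M"
    and "\<And>j. j < length xs \<Longrightarrow> \<bar>g (xs ! j) - g (ys ! j)\<bar> \<le> D"
  shows "\<bar>prod_list (map g xs) - prod_list (map g ys)\<bar> \<le> real (length xs) * M ^ length xs * D"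
  using assms(1,5)
proof (induction xs arbitrary: ys)
  case Nil then show ?case by simp
next
  case (Cons a xs)
  then obtain b ys' where ys: "ys = b # ys'" and len: "length xs = length ys'" by (cases ys) auto
  let ?P = "prod_list (map g xs)" and ?Q = "prod_list (map g ys')"
  have IH: "\<bar>?P - ?Q\<bar> \<le> real (length xs) * M ^ length xs * D"
    using Cons.IH[OF len] Cons.prems(2)[of "Suc _"] ys by auto
  have Dab: "\<bar>g a - g b\<bar> \<le> D" using Cons.prems(2)[of 0] ys by simp
  have Q: "0 \<le> ?Q" "?Q \<le> M ^ length xs"
    using prod_list_map_bounds[OF assms(2,3), where xs=ys'] len by auto
  have "g a * ?P - g b * ?Q = g a * (?P - ?Q) + ?Q * (g a - g b)"
    by (simp add: algebra_simps)
  then have "\<bar>g a * ?P - g b * ?Q\<bar> \<le> g a * \<bar>?P - ?Q\<bar> + ?Q * \<bar>g a - g b\<bar>"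
    using assms(2)[of a] Q(1) abs_triangle_ineq[of "g a * (?P - ?Q)" "?Q * (g a - g b)"]
    by (simp add: abs_mult)
  also have "\<dots> \<le> M * (real (length xs) * M ^ length xs * D) + M ^ length xs * D"
    using IH Dab Q assms(2,3)[of a] by (intro add_mono mult_mono) auto
  also have "\<dots> \<le> real (length (a # xs)) * M ^ length (a # xs) * D"
  proof -
    have "M ^ length xs * D \<le> M ^ Suc (length xs) * D"
      using assms(4) Dab by (intro mult_right_mono power_increasing) auto
    then show ?thesis by (simp add: algebra_simps)
  qed
  finally show ?case using ys by simp
qed

lemma lLip_prod_list_map:
  fixes g :: "real \<Rightarrow> real"
  assumes "\<And>a. 0 \<le> g a" "\<And>a. g a \<le> M" "1 \<le> M" "0 \<le> L"
    and "\<And>a b. \<bar>g a - g b\<bar> \<le> L * (1 + \<bar>a\<bar> + \<bar>b\<bar>) * \<bar>a - b\<bar>"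
  shows "lLip n (\<lambda>v. prod_list (map g v))"
  unfolding lLip_def
proof (intro exI[of _ "real n * M ^ n * L"] exI[of _ 1] allI impI)
  fix x y :: "real list" assume len: "length x = n" "length y = n"
  let ?D = "L * (1 + vnorm x + vnorm y) * vnorm (vdiff x y)"
  have "\<bar>prod_list (map g x) - prod_list (map g y)\<bar> \<le> real (length x) * M ^ length x * ?D"
  proof (rule prod_list_map_diff_le)
    fix j assume j: "j < length x"
    have "\<bar>g (x!j) - g (y!j)\<bar> \<le> L * (1 + \<bar>x!j\<bar> + \<bar>y!j\<bar>) * \<bar>x!j - y!j\<bar>" by (rule assms(5))
    also have "\<dots> \<le> ?D"
      using nth_le_vnorm[OF j] nth_le_vnorm[of j y] nth_diff_le_vnorm_vdiff[OF j] len j assms(4)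
      by (intro mult_mono) auto
    finally show "\<bar>g (x!j) - g (y!j)\<bar> \<le> ?D" .
  qed (use len assms in auto)
  then show "\<bar>prod_list (map g x) - prod_list (map g y)\<bar>
         \<le> real n * M ^ n * L * (1 + vnorm x ^ 1 + vnorm y ^ 1) * vnorm (vdiff x y)"
    using len by (simp add: mult.assoc)
qed


section \<open>Sub-linear expectations\<close>

locale sublinear_expectation =
  fixes H :: "('w \<Rightarrow> real) set" and E :: "('w \<Rightarrow> real) \<Rightarrow> ereal"
  assumes space: "sublinear_expectation_space H E"
begin

lemmas space_unfolded = space[unfolded sublinear_expectation_space_def]

lemma const_in_H: "(\<lambda>_. c) \<in> H"
  using space_unfolded by blast

lemma add_in_H: "U \<in> H \<Longrightarrow> V \<in> H \<Longrightarrow> (\<lambda>\<omega>. U \<omega> + V \<omega>) \<in> H"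
  using space_unfolded by blast

lemma scale_in_H: "U \<in> H \<Longrightarrow> (\<lambda>\<omega>. c * U \<omega>) \<in> H"
  using space_unfolded by blast

lemma lLip_comp_in_H: "set Xs \<subseteq> H \<Longrightarrow> lLip (length Xs) \<phi> \<Longrightarrow> (\<lambda>\<omega>. \<phi> (vec Xs \<omega>)) \<in> H"
  using space_unfolded by blast

lemma E_mono: "U \<in> H \<Longrightarrow> V \<in> H \<Longrightarrow> (\<And>\<omega>. U \<omega> \<le> V \<omega>) \<Longrightarrow> E U \<le> E V"
  using space_unfolded by blast

lemma E_const: "E (\<lambda>_. c) = ereal c"
  using space_unfolded by blast

lemma E_subadd: "U \<in> H \<Longrightarrow> V \<in> H \<Longrightarrow> E (\<lambda>\<omega>. U \<omega> + V \<omega>) \<le> E U + E V"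
  using space_unfolded by blast

lemma E_pos_homogeneous: "U \<in> H \<Longrightarrow> c > 0 \<Longrightarrow> E (\<lambda>\<omega>. c * U \<omega>) = ereal c * E U"
  using space_unfolded by blast

lemma E_add_const_le: "U \<in> H \<Longrightarrow> E (\<lambda>\<omega>. U \<omega> + c) \<le> E U + ereal c"
  using E_subadd[OF _ const_in_H, of U c] E_const by simp

lemma E_nonneg_scale:
  assumes "U \<in> H" "E U = ereal m" "0 \<le> p"
  shows "E (\<lambda>\<omega>. p * U \<omega>) = ereal (p * m)"
  using assms E_pos_homogeneous[OF assms(1), of p] E_const[of 0] by (cases "p = 0") auto

lemma lipschitz_comp_in_H:
  assumes "U \<in> H" and "\<And>a b. \<bar>\<phi> a - \<phi> b\<bar> \<le> C * (1 + \<bar>a\<bar>^m + \<bar>b\<bar>^m) * \<bar>a - b\<bar>"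
  shows "(\<lambda>\<omega>. \<phi> (U \<omega>)) \<in> H"
  using lLip_comp_in_H[of "[U]" "\<lambda>v. \<phi> (hd v)"] lLip_one_of_scalar[OF assms(2)] assms(1)
  by (simp add: vec_def)

lemma nonexpansive_comp_in_H:
  assumes "U \<in> H" and "\<And>a b. \<bar>\<phi> a - \<phi> b\<bar> \<le> \<bar>a - b\<bar>"
  shows "(\<lambda>\<omega>. \<phi> (U \<omega>)) \<in> H"
proof (rule lipschitz_comp_in_H[OF assms(1), where C=1 and m=0])
  fix a b show "\<bar>\<phi> a - \<phi> b\<bar> \<le> 1 * (1 + \<bar>a\<bar>^0 + \<bar>b\<bar>^0) * \<bar>a - b\<bar>"
  proof -
    have "1 * (1 + \<bar>a\<bar>^0 + \<bar>b\<bar>^0) * \<bar>a - b\<bar> = 3 * \<bar>a - b\<bar>" by simp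
    then show ?thesis using assms(2)[of a b] abs_ge_zero[of "a - b"] by linarith
  qed
qed

lemma E_bounded:
  assumes "U \<in> H" "\<And>\<omega>. a \<le> U \<omega>" "\<And>\<omega>. U \<omega> \<le> b"
  shows "E U = ereal (real_of_ereal (E U))" "a \<le> real_of_ereal (E U)" "real_of_ereal (E U) \<le> b"
proof -
  have lo: "ereal a \<le> E U" and hi: "E U \<le> ereal b"
    using E_mono[OF const_in_H assms(1), of a] E_mono[OF assms(1) const_in_H, of b] assms
    by (auto simp: E_const)
  then show "E U = ereal (real_of_ereal (E U))" by (cases "E U") auto
  then show "a \<le> real_of_ereal (E U)" "real_of_ereal (E U) \<le> b"
    using lo hi by (cases "E U"; simp)+
qed

lemma lowerE_le_E:
  assumes Y: "Y \<in> H" and "\<And>\<omega>. a \<le> Y \<omega>" "\<And>\<omega>. Y \<omega> \<le> b"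
  shows "real_of_ereal (lowerE E Y) \<le> real_of_ereal (E Y)"
proof -
  have mY: "(\<lambda>\<omega>. - Y \<omega>) \<in> H" using scale_in_H[OF Y, of "-1"] by simp
  have e1: "E Y = ereal (real_of_ereal (E Y))" by (rule E_bounded(1)[OF Y assms(2,3)])
  have e2: "E (\<lambda>\<omega>. - Y \<omega>) = ereal (real_of_ereal (E (\<lambda>\<omega>. - Y \<omega>)))"
    by (rule E_bounded(1)[OF mY, of "-b" "-a"]) (use assms in auto)
  have "ereal 0 = E (\<lambda>\<omega>. Y \<omega> + - Y \<omega>)" using E_const[of 0] by simp
  also have "\<dots> \<le> E Y + E (\<lambda>\<omega>. - Y \<omega>)" by (rule E_subadd[OF Y mY])
  finally have "0 \<le> real_of_ereal (E Y) + real_of_ereal (E (\<lambda>\<omega>. - Y \<omega>))"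
    using e1 e2 by (metis ereal_less_eq(3) plus_ereal.simps(1))
  moreover have "real_of_ereal (lowerE E Y) = - real_of_ereal (E (\<lambda>\<omega>. - Y \<omega>))"
    unfolding lowerE_def using e2 by (metis real_of_ereal.simps(1) uminus_ereal.simps(1))
  ultimately show ?thesis by linarith
qed

lemma E_sum_le:
  fixes N :: nat
  assumes "\<And>k. k \<le> N \<Longrightarrow> f k \<in> H"
  shows "(\<lambda>\<omega>. \<Sum>k\<le>N. f k \<omega>) \<in> H \<and> E (\<lambda>\<omega>. \<Sum>k\<le>N. f k \<omega>) \<le> (\<Sum>k\<le>N. E (f k))"
  using assms
proof (induction N)
  case 0
  then show ?case by (simp add: eta_contract_eq)
next
  case (Suc N)
  then have IH: "(\<lambda>\<omega>. \<Sum>k\<le>N. f k \<omega>) \<in> H" "E (\<lambda>\<omega>. \<Sum>k\<le>N. f k \<omega>) \<le> (\<Sum>k\<le>N. E (f k))"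
    and fS: "f (Suc N) \<in> H" by auto
  have "E (\<lambda>\<omega>. \<Sum>k\<le>Suc N. f k \<omega>) \<le> E (\<lambda>\<omega>. \<Sum>k\<le>N. f k \<omega>) + E (f (Suc N))"
    using E_subadd[OF IH(1) fS] by simp
  also have "\<dots> \<le> (\<Sum>k\<le>Suc N. E (f k))" using IH(2) by (simp add: add_right_mono)
  finally show ?case using add_in_H[OF IH(1) fS] by simp
qed

lemma capV_le_E: "\<xi> \<in> H \<Longrightarrow> (\<And>\<omega>. indicator A \<omega> \<le> \<xi> \<omega>) \<Longrightarrow> capV H E A \<le> E \<xi>"
  unfolding capV_def by (rule Inf_lower) blast

lemma E_le_mult_capV:
  assumes W: "W \<in> H" and t: "t > 0"
    and dom: "\<And>\<xi> \<omega>. \<xi> \<in> H \<Longrightarrow> (\<forall>\<omega>. indicator A \<omega> \<le> \<xi> \<omega>) \<Longrightarrow> W \<omega> \<le> t * \<xi> \<omega>"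
  shows "E W \<le> ereal t * capV H E A"
proof -
  have "ereal (1/t) * E W \<le> capV H E A"
    unfolding capV_def
  proof (rule Inf_greatest, clarify)
    fix \<xi> assume \<xi>: "\<xi> \<in> H" "\<forall>\<omega>. indicator A \<omega> \<le> \<xi> \<omega>"
    have "E W \<le> E (\<lambda>\<omega>. t * \<xi> \<omega>)" using E_mono[OF W scale_in_H[OF \<xi>(1)]] dom \<xi> by blast
    then have "E W \<le> ereal t * E \<xi>" using E_pos_homogeneous[OF \<xi>(1) t] by simp
    then have "ereal (1/t) * E W \<le> ereal (1/t) * (ereal t * E \<xi>)"
      using t by (intro ereal_mult_left_mono) auto
    also have "\<dots> = E \<xi>" using t by (simp add: mult.assoc[symmetric])
    finally show "ereal (1/t) * E W \<le> E \<xi>" .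
  qed
  then have "ereal t * (ereal (1/t) * E W) \<le> ereal t * capV H E A"
    using t by (intro ereal_mult_left_mono) auto
  then show ?thesis using t by (simp add: mult.assoc[symmetric])
qed

end

lemma prod_list_map_upt_eq_prod: "prod_list (map f [1..<n+1]) = (\<Prod>j=1..n. f j)"
  using prod.distinct_set_conv_list[of "[1..<n+1]" f]
  by (simp add: atLeastLessThanSuc_atLeastAtMost del: upt_Suc)

locale iid_sequence = sublinear_expectation H E
  for H :: "('w \<Rightarrow> real) set" and E :: "('w \<Rightarrow> real) \<Rightarrow> ereal" +
  fixes X0 :: "'w \<Rightarrow> real" and X :: "nat \<Rightarrow> 'w \<Rightarrow> real"
  assumes X0_in_H: "X0 \<in> H" and X_in_H: "\<And>n. n \<ge> 1 \<Longrightarrow> X n \<in> H"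
    and indep: "indep_seq H E X"
    and ident: "\<And>n. n \<ge> 1 \<Longrightarrow> ident_distr E (X n) X0"
begin

context
  fixes g :: "real \<Rightarrow> real" and M L :: real
  assumes g_nonneg: "\<And>a. 0 \<le> g a" and g_le: "\<And>a. g a \<le> M" and M_ge: "1 \<le> M" and L_nonneg: "0 \<le> L"
    and g_lip: "\<And>a b. \<bar>g a - g b\<bar> \<le> L * (1 + \<bar>a\<bar> + \<bar>b\<bar>) * \<bar>a - b\<bar>"
begin

private lemma g_lip': "\<bar>g a - g b\<bar> \<le> L * (1 + \<bar>a\<bar>^1 + \<bar>b\<bar>^1) * \<bar>a - b\<bar>"
  using g_lip by simp

private lemma g_comp_in_H: "U \<in> H \<Longrightarrow> (\<lambda>\<omega>. g (U \<omega>)) \<in> H"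
  by (rule lipschitz_comp_in_H[OF _ g_lip'])

private abbreviation "m \<equiv> real_of_ereal (E (\<lambda>\<omega>. g (X0 \<omega>)))"

lemma E_factor_X0: "E (\<lambda>\<omega>. g (X0 \<omega>)) = ereal m" "0 \<le> m"
  using E_bounded[OF g_comp_in_H[OF X0_in_H], of 0 M] g_nonneg g_le by auto

lemma E_factor_X: "k \<ge> 1 \<Longrightarrow> E (\<lambda>\<omega>. g (X k \<omega>)) = ereal m"
proof -
  assume "k \<ge> 1"
  then have "E (\<lambda>\<omega>. g (hd [X k \<omega>])) = E (\<lambda>\<omega>. g (hd [X0 \<omega>]))"
    using ident lLip_one_of_scalar[OF g_lip'] unfolding ident_distr_def by blast
  then show ?thesis using E_factor_X0(1) by simp
qed

lemma prod_factor_in_H: "(\<lambda>\<omega>. \<Prod>j=1..n. g (X j \<omega>)) \<in> H"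
proof -
  have "set (map X [1..<n+1]) \<subseteq> H" using X_in_H by (auto simp del: upt_Suc)
  from lLip_comp_in_H[OF this lLip_prod_list_map[OF g_nonneg g_le M_ge L_nonneg g_lip]]
  show ?thesis unfolding prod_list_map_upt_eq_prod[symmetric] by (simp add: vec_def o_def)
qed

lemma E_prod_factor_Suc:
  assumes "n \<ge> 1"
  shows "E (\<lambda>\<omega>. \<Prod>j=1..Suc n. g (X j \<omega>)) = E (\<lambda>\<omega>. m * (\<Prod>j=1..n. g (X j \<omega>)))"
proof -
  let ?Xs = "map X [1..<n+1]" and ?\<phi> = "\<lambda>v. prod_list (map g v)"
  have inner: "E (\<lambda>\<omega>'. ?\<phi> (x @ [X (n+1) \<omega>'])) = ereal (?\<phi> x * m)" for x
  proof -
    have "E (\<lambda>\<omega>'. ?\<phi> (x @ [X (n+1) \<omega>'])) = E (\<lambda>\<omega>'. ?\<phi> x * g (X (n+1) \<omega>'))" by simp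
    also have "\<dots> = ereal (?\<phi> x * m)"
      by (rule E_nonneg_scale[OF g_comp_in_H[OF X_in_H] E_factor_X])
        (auto intro: prod_list_map_bounds g_nonneg g_le)
    finally show ?thesis .
  qed
  then have fin: "\<forall>x. length x = length ?Xs \<longrightarrow> \<bar>E (\<lambda>\<omega>'. ?\<phi> (x @ [X (n+1) \<omega>']))\<bar> \<noteq> \<infinity>"
    by simp
  have ind: "indep_of H E (X (n+1)) ?Xs" using indep assms unfolding indep_seq_def by (simp del: upt_Suc)
  have lip: "lLip (Suc (length ?Xs)) ?\<phi>" by (rule lLip_prod_list_map[OF g_nonneg g_le M_ge L_nonneg g_lip])
  have eq: "E (\<lambda>\<omega>. ?\<phi> (vec ?Xs \<omega> @ [X (n+1) \<omega>])) =
      E (\<lambda>\<omega>. real_of_ereal (E (\<lambda>\<omega>'. ?\<phi> (vec ?Xs \<omega> @ [X (n+1) \<omega>']))))"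
    using ind lip fin unfolding indep_of_def by blast
  have "[1..<Suc n+1] = [1..<n+1] @ [n+1]" by simp
  then have lhs: "?\<phi> (vec ?Xs \<omega> @ [X (n+1) \<omega>]) = (\<Prod>j=1..Suc n. g (X j \<omega>))" for \<omega>
    unfolding prod_list_map_upt_eq_prod[symmetric] by (simp add: vec_def o_def del: upt_Suc)
  have rhs: "real_of_ereal (E (\<lambda>\<omega>'. ?\<phi> (vec ?Xs \<omega> @ [X (n+1) \<omega>'])))
      = m * (\<Prod>j=1..n. g (X j \<omega>))" for \<omega>
    unfolding inner prod_list_map_upt_eq_prod[symmetric] by (simp add: vec_def o_def del: upt_Suc)
  show ?thesis using eq unfolding lhs rhs .
qed

lemma E_prod_factor: "E (\<lambda>\<omega>. \<Prod>j=1..n. g (X j \<omega>)) = ereal (m ^ n)"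
proof (induction n)
  case 0
  then show ?case using E_const[of 1] by simp
next
  case (Suc n)
  show ?case
  proof (cases "n = 0")
    case True
    then show ?thesis using E_factor_X[of 1] by simp
  next
    case False
    then have "E (\<lambda>\<omega>. \<Prod>j=1..Suc n. g (X j \<omega>)) = E (\<lambda>\<omega>. m * (\<Prod>j=1..n. g (X j \<omega>)))"
      by (intro E_prod_factor_Suc) simp
    also have "\<dots> = ereal (m * m ^ n)"
      by (rule E_nonneg_scale[OF prod_factor_in_H Suc.IH E_factor_X0(2)])
    finally show ?thesis by simp
  qed
qed

end

end

section \<open>The exponential factor\<close>

lemma exp_sub_half_square_le_one_plus:
  fixes y :: real assumes "0 \<le> y" shows "exp (y - y\<^sup>2/2) \<le> 1 + y"
proof -
  let ?h = "\<lambda>t. (1 + t) * exp (-(t - t\<^sup>2/2))"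
  have "?h 0 \<le> ?h y"
  proof (rule DERIV_nonneg_imp_nondecreasing[OF assms])
    fix x :: real
    have "(?h has_real_derivative (x\<^sup>2 * exp (-(x - x\<^sup>2/2)))) (at x)"
      by (auto intro!: derivative_eq_intros simp: power2_eq_square algebra_simps)
    then show "\<exists>d. (?h has_real_derivative d) (at x) \<and> 0 \<le> d" by auto
  qed
  then have "1 \<le> (1 + y) * exp (-(y - y\<^sup>2/2))" by simp
  then show ?thesis by (simp add: exp_minus field_simps)
qed

lemma exp_le_second_order:
  fixes u :: real assumes "u \<le> 0" shows "exp u \<le> 1 + u + u\<^sup>2/2"
proof -
  let ?h = "\<lambda>t. 1 + t + t\<^sup>2/2 - exp t"
  have "?h 0 \<le> ?h u"
  proof (rule DERIV_nonpos_imp_nonincreasing[OF assms])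
    fix x :: real assume "x \<le> 0"
    have "(?h has_real_derivative (1 + x - exp x)) (at x)"
      by (auto intro!: derivative_eq_intros simp: power2_eq_square)
    moreover have "1 + x - exp x \<le> 0" using exp_ge_add_one_self[of x] by simp
    ultimately show "\<exists>d. (?h has_real_derivative d) (at x) \<and> d \<le> 0" by auto
  qed
  then show ?thesis by simp
qed

lemma exp_sub_half_square_le:
  fixes a y :: real assumes a: "0 < a" "a \<le> 1"
  shows "exp (y - y\<^sup>2/2) \<le> 1 + y + a * min (y\<^sup>2) (a\<^sup>2) + 2 * max (\<bar>y\<bar> - a/2) 0"
proof -
  have nn: "0 \<le> a * min (y\<^sup>2) (a\<^sup>2)" "0 \<le> 2 * max (\<bar>y\<bar> - a/2) 0" using a by auto
  consider "0 \<le> y" | "-a \<le> y" "y < 0" | "y < -a" by linarith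
  then show ?thesis
  proof cases
    case 1
    then show ?thesis using exp_sub_half_square_le_one_plus[OF 1] nn by linarith
  next
    case 2
    let ?u = "y - y\<^sup>2/2"
    have "?u \<le> 0" using 2 by (simp add: power2_eq_square)
    then have "exp ?u \<le> 1 + ?u + ?u\<^sup>2/2" by (rule exp_le_second_order)
    also have "\<dots> = 1 + y + y\<^sup>2 * (- y / 2 + y\<^sup>2 / 8)"
      by (simp add: power2_eq_square field_simps)
    also have "\<dots> \<le> 1 + y + y\<^sup>2 * a"
    proof -
      have "0 \<le> (y + 1) * (- y)" using 2 a by (intro mult_nonneg_nonneg) auto
      then have "y\<^sup>2 \<le> - y" by (simp add: power2_eq_square algebra_simps)
      then have "- y / 2 + y\<^sup>2 / 8 \<le> a" using 2 by linarith
      then show ?thesis by (simp add: mult_left_mono)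
    qed
    also have "y\<^sup>2 * a = a * min (y\<^sup>2) (a\<^sup>2)"
      using 2 a by (simp add: abs_le_square_iff[symmetric] abs_if)
    finally show ?thesis using nn by linarith
  next
    case 3
    have "y - y\<^sup>2/2 \<le> 0" using 3 a zero_le_power2[of y] by linarith
    then have "exp (y - y\<^sup>2/2) \<le> 1" by simp
    moreover have "2 * max (\<bar>y\<bar> - a/2) 0 = -2*y - a" using 3 a by auto
    ultimately show ?thesis using nn 3 a by linarith
  qed
qed

definition selfnorm_factor :: "real \<Rightarrow> real \<Rightarrow> real" where
  "selfnorm_factor c t = exp (c*t - c\<^sup>2*t\<^sup>2/2)"

lemma selfnorm_factor_pos: "0 < selfnorm_factor c t"
  by (simp add: selfnorm_factor_def)

lemma selfnorm_factor_le: "selfnorm_factor c t \<le> exp (1/2)"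
proof -
  have "c*t - c\<^sup>2*t\<^sup>2/2 \<le> 1/2"
    using zero_le_power2[of "c*t - 1"] by (simp add: power2_eq_square algebra_simps)
  then show ?thesis by (simp add: selfnorm_factor_def)
qed

lemma selfnorm_factor_le_linear:
  fixes a t c :: real assumes a: "0 < a" "a \<le> 1" and c: "0 < c"
  shows "selfnorm_factor c t
    \<le> 1 + c*t + a*c\<^sup>2 * min (t\<^sup>2) ((a/c)\<^sup>2) + 2*c * max (\<bar>t\<bar> - a/(2*c)) 0"
proof -
  have "min ((c*t)\<^sup>2) (a\<^sup>2) = c\<^sup>2 * min (t\<^sup>2) ((a/c)\<^sup>2)"
    using c by (simp add: min_mult_distrib_left power_mult_distrib power_divide)
  moreover have "max (\<bar>c*t\<bar> - a/2) 0 = c * max (\<bar>t\<bar> - a/(2*c)) 0"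
    using c by (simp add: max_mult_distrib_left right_diff_distrib abs_mult)
  ultimately show ?thesis
    using exp_sub_half_square_le[OF a, of "c*t"]
    by (simp add: selfnorm_factor_def power_mult_distrib mult.assoc)
qed

lemma selfnorm_factor_lipschitz:
  fixes c :: real assumes c: "0 \<le> c"
  shows "\<bar>selfnorm_factor c a - selfnorm_factor c b\<bar>
     \<le> ((c + c\<^sup>2) * exp (1/2)) * (1 + \<bar>a\<bar> + \<bar>b\<bar>) * \<bar>a - b\<bar>"
proof -
  let ?G = "selfnorm_factor c" and ?K = "(c + c\<^sup>2) * exp (1/2) * (1 + \<bar>a\<bar> + \<bar>b\<bar>)"
  let ?G' = "\<lambda>t. selfnorm_factor c t * (c - c\<^sup>2*t)"
  have D: "(?G has_real_derivative ?G' t) (at t)" for t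
    unfolding selfnorm_factor_def
    by (auto intro!: derivative_eq_intros simp: power2_eq_square algebra_simps)
  have bound: "\<bar>?G' t\<bar> \<le> ?K" if "\<bar>t\<bar> \<le> \<bar>a\<bar> + \<bar>b\<bar>" for t
  proof -
    have "\<bar>c - c\<^sup>2*t\<bar> \<le> c + c\<^sup>2 * (\<bar>a\<bar> + \<bar>b\<bar>)"
      using abs_triangle_ineq4[of c "c\<^sup>2*t"] c that
      by (simp add: abs_mult) (meson add_left_mono mult_left_mono order_trans zero_le_power2)
    also have "\<dots> \<le> (c + c\<^sup>2) * (1 + \<bar>a\<bar> + \<bar>b\<bar>)" using c by (simp add: algebra_simps)
    finally have "\<bar>c - c\<^sup>2*t\<bar> \<le> (c + c\<^sup>2) * (1 + \<bar>a\<bar> + \<bar>b\<bar>)" .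
    then have "selfnorm_factor c t * \<bar>c - c\<^sup>2*t\<bar> \<le> exp (1/2) * ((c + c\<^sup>2) * (1 + \<bar>a\<bar> + \<bar>b\<bar>))"
      using selfnorm_factor_le selfnorm_factor_pos[THEN less_imp_le] by (intro mult_mono) auto
    then show ?thesis using selfnorm_factor_pos[of c t] by (simp add: abs_mult mult_ac)
  qed
  have main: "\<bar>?G v - ?G u\<bar> \<le> ?K * (v - u)"
    if uv: "u < v" "\<bar>u\<bar> \<le> \<bar>a\<bar> + \<bar>b\<bar>" "\<bar>v\<bar> \<le> \<bar>a\<bar> + \<bar>b\<bar>" for u v
  proof -
    obtain w where w: "u < w" "w < v" "?G v - ?G u = (v - u) * ?G' w"
      using MVT2[OF uv(1), of ?G ?G'] D by blast
    have "\<bar>?G' w\<bar> \<le> ?K" using w uv by (intro bound) linarith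
    then show ?thesis using w uv by (simp add: abs_mult mult.commute mult_left_mono)
  qed
  consider "a < b" | "a = b" | "b < a" by linarith
  then show ?thesis
  proof cases
    case 1 then show ?thesis using main[of a b] by (simp add: abs_minus_commute mult.assoc)
  next
    case 3 then show ?thesis using main[of b a] by (simp add: mult.assoc)
  qed simp
qed

lemma prod_selfnorm_factor:
  "finite A \<Longrightarrow> (\<Prod>j\<in>A. selfnorm_factor c (x j)) = exp (c * (\<Sum>j\<in>A. x j) - c\<^sup>2 * (\<Sum>j\<in>A. (x j)\<^sup>2) / 2)"
  by (simp add: selfnorm_factor_def exp_sum[symmetric] sum_subtractf sum_distrib_left sum_divide_distrib)

section \<open>Truncated second moments and tails\<close>

context sublinear_expectation
begin

definition truncated_second_moment :: "('w \<Rightarrow> real) \<Rightarrow> real \<Rightarrow> real" where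
  "truncated_second_moment Y x = real_of_ereal (E (\<lambda>\<omega>. min ((Y \<omega>)\<^sup>2) (x\<^sup>2)))"

lemma min_square_in_H: "Y \<in> H \<Longrightarrow> (\<lambda>\<omega>. min ((Y \<omega>)\<^sup>2) (x\<^sup>2)) \<in> H"
proof (erule lipschitz_comp_in_H[where C=1 and m=1])
  fix a b :: real
  have "\<bar>min (a\<^sup>2) (x\<^sup>2) - min (b\<^sup>2) (x\<^sup>2)\<bar> \<le> \<bar>a\<^sup>2 - b\<^sup>2\<bar>" by (simp add: min_def abs_if)
  also have "\<dots> = \<bar>a + b\<bar> * \<bar>a - b\<bar>" by (simp add: power2_eq_square algebra_simps flip: abs_mult)
  also have "\<dots> \<le> (1 + \<bar>a\<bar> + \<bar>b\<bar>) * \<bar>a - b\<bar>" by (intro mult_right_mono) auto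
  finally show "\<bar>min (a\<^sup>2) (x\<^sup>2) - min (b\<^sup>2) (x\<^sup>2)\<bar> \<le> 1 * (1 + \<bar>a\<bar>^1 + \<bar>b\<bar>^1) * \<bar>a - b\<bar>" by simp
qed

lemma truncated_second_moment:
  assumes "Y \<in> H"
  shows "E (\<lambda>\<omega>. min ((Y \<omega>)\<^sup>2) (x\<^sup>2)) = ereal (truncated_second_moment Y x)"
    and "0 \<le> truncated_second_moment Y x" and "truncated_second_moment Y x \<le> x\<^sup>2"
  using E_bounded[OF min_square_in_H[OF assms], where a=0 and b="x\<^sup>2"] unfolding truncated_second_moment_def by auto

lemma truncated_second_moment_mono:
  assumes "Y \<in> H" "0 \<le> s" "s \<le> t"
  shows "truncated_second_moment Y s \<le> truncated_second_moment Y t"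
proof -
  have "s\<^sup>2 \<le> t\<^sup>2" using assms by (simp add: power_mono)
  then have "E (\<lambda>\<omega>. min ((Y \<omega>)\<^sup>2) (s\<^sup>2)) \<le> E (\<lambda>\<omega>. min ((Y \<omega>)\<^sup>2) (t\<^sup>2))"
    by (intro E_mono min_square_in_H assms(1)) auto
  then show ?thesis using truncated_second_moment(1)[OF assms(1)] by simp
qed

lemma truncated_second_moment_lipschitz:
  assumes Y: "Y \<in> H"
  shows "\<bar>truncated_second_moment Y s - truncated_second_moment Y t\<bar> \<le> \<bar>s\<^sup>2 - t\<^sup>2\<bar>"
proof -
  have *: "truncated_second_moment Y s \<le> truncated_second_moment Y t + \<bar>s\<^sup>2 - t\<^sup>2\<bar>" for s t
  proof -
    have "E (\<lambda>\<omega>. min ((Y \<omega>)\<^sup>2) (s\<^sup>2)) \<le> E (\<lambda>\<omega>. min ((Y \<omega>)\<^sup>2) (t\<^sup>2) + \<bar>s\<^sup>2 - t\<^sup>2\<bar>)"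
      by (intro E_mono min_square_in_H Y add_in_H const_in_H) (auto simp: min_def abs_if)
    also have "\<dots> \<le> E (\<lambda>\<omega>. min ((Y \<omega>)\<^sup>2) (t\<^sup>2)) + ereal \<bar>s\<^sup>2 - t\<^sup>2\<bar>"
      by (rule E_add_const_le[OF min_square_in_H[OF Y]])
    finally show ?thesis using truncated_second_moment(1)[OF Y] by simp
  qed
  show ?thesis using *[of s t] *[of t s] by (simp add: abs_minus_commute abs_le_iff)
qed

lemma continuous_truncated_second_moment:
  assumes "Y \<in> H" shows "continuous_on UNIV (truncated_second_moment Y)"
  unfolding continuous_on_iff
proof (intro ballI allI impI)
  fix t e :: real assume "0 < e"
  moreover have "continuous_on UNIV (\<lambda>s::real. s\<^sup>2)" by (intro continuous_intros)
  ultimately obtain d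
    where "0 < d" "\<And>s. dist s t < d \<Longrightarrow> dist (s\<^sup>2) (t\<^sup>2) < e"
    unfolding continuous_on_iff by blast
  moreover have "dist (truncated_second_moment Y s) (truncated_second_moment Y t) \<le> dist (s\<^sup>2) (t\<^sup>2)"
    for s unfolding dist_real_def by (rule truncated_second_moment_lipschitz[OF assms])
  ultimately show "\<exists>d>0. \<forall>s\<in>UNIV. dist s t < d \<longrightarrow>
      dist (truncated_second_moment Y s) (truncated_second_moment Y t) < e"
    by (meson UNIV_I order_le_less_trans)
qed

lemma tail_in_H: "Y \<in> H \<Longrightarrow> (\<lambda>\<omega>. max (\<bar>Y \<omega>\<bar> - c) 0) \<in> H"
  by (erule nonexpansive_comp_in_H) (simp add: max_def abs_if)

lemma capped_tail_in_H: "Y \<in> H \<Longrightarrow> (\<lambda>\<omega>. min (max (\<bar>Y \<omega>\<bar> - c) 0) t) \<in> H"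
  by (erule nonexpansive_comp_in_H) (simp add: max_def min_def abs_if)

lemma truncated_second_moment_double:
  assumes Y: "Y \<in> H" and t: "0 < t"
  shows "ereal (truncated_second_moment Y (2*t))
    \<le> ereal (truncated_second_moment Y t) + ereal (3*t\<^sup>2) * capV H E {\<omega>. \<bar>Y \<omega>\<bar> \<ge> t}"
proof -
  let ?W = "\<lambda>\<omega>. min ((Y \<omega>)\<^sup>2) ((2*t)\<^sup>2) + (-1) * min ((Y \<omega>)\<^sup>2) (t\<^sup>2)"
  have WH: "?W \<in> H" by (intro add_in_H scale_in_H min_square_in_H Y)
  have "E ?W \<le> ereal (3*t\<^sup>2) * capV H E {\<omega>. \<bar>Y \<omega>\<bar> \<ge> t}"
  proof (rule E_le_mult_capV[OF WH])
    fix \<xi> :: "'w \<Rightarrow> real" and \<omega> assume "\<forall>\<omega>. indicator {\<omega>. \<bar>Y \<omega>\<bar> \<ge> t} \<omega> \<le> \<xi> \<omega>"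
    then have xi: "indicator {\<omega>. \<bar>Y \<omega>\<bar> \<ge> t} \<omega> \<le> \<xi> \<omega>" by blast
    show "?W \<omega> \<le> 3*t\<^sup>2 * \<xi> \<omega>"
    proof (cases "\<bar>Y \<omega>\<bar> \<ge> t")
      case True
      then have "t\<^sup>2 \<le> (Y \<omega>)\<^sup>2" using t by (simp add: abs_le_square_iff[symmetric])
      then have "?W \<omega> \<le> 3*t\<^sup>2" by (simp add: power_mult_distrib)
      moreover have "1 \<le> \<xi> \<omega>" using xi True by simp
      ultimately show ?thesis using t by (smt (verit) mult_le_cancel_left1 zero_le_power2)
    next
      case False
      then have "(Y \<omega>)\<^sup>2 \<le> t\<^sup>2" using t by (simp add: abs_le_square_iff[symmetric])
      moreover have "(2*t)\<^sup>2 = 4 * t\<^sup>2" by (simp add: power_mult_distrib)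
      ultimately have "(Y \<omega>)\<^sup>2 \<le> t\<^sup>2" "(Y \<omega>)\<^sup>2 \<le> (2*t)\<^sup>2" using zero_le_power2[of t] by linarith+
      then have "?W \<omega> = 0" by (simp only: min_absorb1)
      moreover have "0 \<le> \<xi> \<omega>" using xi False by simp
      ultimately show ?thesis by simp
    qed
  qed (use t in simp)
  moreover have "E (\<lambda>\<omega>. min ((Y \<omega>)\<^sup>2) ((2*t)\<^sup>2)) \<le> E (\<lambda>\<omega>. min ((Y \<omega>)\<^sup>2) (t\<^sup>2)) + E ?W"
    using E_subadd[OF min_square_in_H[OF Y, of t] WH] by simp
  ultimately show ?thesis
    unfolding truncated_second_moment(1)[OF Y, symmetric] by (meson add_left_mono order_trans)
qed

lemma E_capped_tail_le_capV:
  assumes Y: "Y \<in> H" and t: "0 < t"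
  shows "E (\<lambda>\<omega>. min (max (\<bar>Y \<omega>\<bar> - t) 0) t) \<le> ereal t * capV H E {\<omega>. \<bar>Y \<omega>\<bar> \<ge> t}"
proof (rule E_le_mult_capV[OF capped_tail_in_H[OF Y] t])
  fix \<xi> :: "'w \<Rightarrow> real" and \<omega> assume "\<forall>\<omega>. indicator {\<omega>. \<bar>Y \<omega>\<bar> \<ge> t} \<omega> \<le> \<xi> \<omega>"
  then have xi: "indicator {\<omega>. \<bar>Y \<omega>\<bar> \<ge> t} \<omega> \<le> \<xi> \<omega>" by blast
  show "min (max (\<bar>Y \<omega>\<bar> - t) 0) t \<le> t * \<xi> \<omega>"
  proof (cases "\<bar>Y \<omega>\<bar> \<ge> t")
    case True
    then show ?thesis using xi t by (simp add: mult_le_cancel_left1 min.coboundedI2)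
  next
    case False
    then show ?thesis using xi t by simp
  qed
qed

lemma E_tail_le_double_tail:
  assumes Y: "Y \<in> H" and t: "0 < t"
  shows "E (\<lambda>\<omega>. max (\<bar>Y \<omega>\<bar> - t) 0)
    \<le> ereal t * capV H E {\<omega>. \<bar>Y \<omega>\<bar> \<ge> t} + E (\<lambda>\<omega>. max (\<bar>Y \<omega>\<bar> - 2*t) 0)"
proof -
  have "max (\<bar>Y \<omega>\<bar> - t) 0 = min (max (\<bar>Y \<omega>\<bar> - t) 0) t + max (\<bar>Y \<omega>\<bar> - 2*t) 0" for \<omega>
    using t by (simp add: max_def min_def)
  then have "E (\<lambda>\<omega>. max (\<bar>Y \<omega>\<bar> - t) 0)
      = E (\<lambda>\<omega>. min (max (\<bar>Y \<omega>\<bar> - t) 0) t + max (\<bar>Y \<omega>\<bar> - 2*t) 0)" by simp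
  also have "\<dots> \<le> E (\<lambda>\<omega>. min (max (\<bar>Y \<omega>\<bar> - t) 0) t) + E (\<lambda>\<omega>. max (\<bar>Y \<omega>\<bar> - 2*t) 0)"
    by (rule E_subadd[OF capped_tail_in_H[OF Y] tail_in_H[OF Y]])
  also have "\<dots> \<le> ereal t * capV H E {\<omega>. \<bar>Y \<omega>\<bar> \<ge> t} + E (\<lambda>\<omega>. max (\<bar>Y \<omega>\<bar> - 2*t) 0)"
    by (rule add_right_mono[OF E_capped_tail_le_capV[OF Y t]])
  finally show ?thesis .
qed

lemma E_tail_le_dyadic_sum:
  assumes Y: "Y \<in> H" and c: "0 < c"
    and \<beta>: "\<And>k. ereal (c*2^k) * capV H E {\<omega>. \<bar>Y \<omega>\<bar> \<ge> c*2^k} \<le> ereal (\<beta> k)"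
  shows "E (\<lambda>\<omega>. max (\<bar>Y \<omega>\<bar> - c) 0) \<le> ereal (\<Sum>k<K. \<beta> k) + E (\<lambda>\<omega>. max (\<bar>Y \<omega>\<bar> - c*2^K) 0)"
proof (induction K)
  case 0 then show ?case by simp
next
  case (Suc K)
  have "E (\<lambda>\<omega>. max (\<bar>Y \<omega>\<bar> - c*2^K) 0)
      \<le> ereal (c*2^K) * capV H E {\<omega>. \<bar>Y \<omega>\<bar> \<ge> c*2^K} + E (\<lambda>\<omega>. max (\<bar>Y \<omega>\<bar> - 2*(c*2^K)) 0)"
    using c by (intro E_tail_le_double_tail[OF Y]) simp
  also have "\<dots> \<le> ereal (\<beta> K) + E (\<lambda>\<omega>. max (\<bar>Y \<omega>\<bar> - c*2^Suc K) 0)"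
    using \<beta>[of K] by (intro add_mono) (auto simp: mult_ac)
  finally have "ereal (\<Sum>k<K. \<beta> k) + E (\<lambda>\<omega>. max (\<bar>Y \<omega>\<bar> - c*2^K) 0)
      \<le> ereal (\<Sum>k<K. \<beta> k) + (ereal (\<beta> K) + E (\<lambda>\<omega>. max (\<bar>Y \<omega>\<bar> - c*2^Suc K) 0))"
    by (rule add_left_mono)
  also have "\<dots> = ereal (\<Sum>k<Suc K. \<beta> k) + E (\<lambda>\<omega>. max (\<bar>Y \<omega>\<bar> - c*2^Suc K) 0)"
    by (simp add: add.assoc[symmetric])
  finally show ?case using Suc.IH by (rule order_trans[rotated])
qed


context
  fixes Y :: "'w \<Rightarrow> real" and \<epsilon> c :: real
  assumes Y: "Y \<in> H" and \<epsilon>: "0 < \<epsilon>" "\<epsilon> \<le> 1/6" and c: "0 < c"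
    and small_capV: "\<And>x. x \<ge> c \<Longrightarrow>
      capV H E {\<omega>. \<bar>Y \<omega>\<bar> \<ge> x} \<le> ereal (\<epsilon> * truncated_second_moment Y x / x\<^sup>2)"
begin

private abbreviation (input) "l \<equiv> truncated_second_moment Y"

lemma truncated_second_moment_dyadic_growth: "l (c * 2^k) \<le> (3/2)^k * l c"
proof (induction k)
  case 0 then show ?case by simp
next
  case (Suc k)
  let ?t = "c * 2^k"
  have t: "0 < ?t" using c by simp
  have "ereal (l (2 * ?t)) \<le> ereal (l ?t) + ereal (3 * ?t\<^sup>2) * capV H E {\<omega>. \<bar>Y \<omega>\<bar> \<ge> ?t}"
    by (rule truncated_second_moment_double[OF Y t])
  also have "\<dots> \<le> ereal (l ?t) + ereal (3 * ?t\<^sup>2) * ereal (\<epsilon> * l ?t / ?t\<^sup>2)"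
    using small_capV[of ?t] c by (intro add_left_mono ereal_mult_left_mono) auto
  also have "\<dots> = ereal (l ?t * (1 + 3 * \<epsilon>))" using c by (simp add: field_simps)
  finally have "l (2 * ?t) \<le> l ?t * (1 + 3 * \<epsilon>)" by simp
  also have "\<dots> \<le> l ?t * (3/2)"
    using \<epsilon> truncated_second_moment(2)[OF Y] by (intro mult_left_mono) auto
  also have "\<dots> \<le> (3/2)^k * l c * (3/2)" using Suc by (intro mult_right_mono) auto
  finally show ?case by (simp add: mult_ac)
qed

lemma dyadic_capV_le: "ereal (c * 2^k) * capV H E {\<omega>. \<bar>Y \<omega>\<bar> \<ge> c * 2^k} \<le> ereal (\<epsilon> * l c / c * (3/4)^k)"
proof -
  let ?t = "c * 2^k"
  have t: "0 < ?t" using c by simp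
  have "ereal ?t * capV H E {\<omega>. \<bar>Y \<omega>\<bar> \<ge> ?t} \<le> ereal ?t * ereal (\<epsilon> * l ?t / ?t\<^sup>2)"
    using small_capV[of ?t] c t by (intro ereal_mult_left_mono) auto
  also have "\<dots> = ereal (\<epsilon> * l ?t / ?t)" using t by (simp add: power2_eq_square)
  also have "\<dots> \<le> ereal (\<epsilon> * ((3/2)^k * l c) / ?t)"
    using truncated_second_moment_dyadic_growth[of k] \<epsilon> t by (simp add: divide_right_mono)
  also have "(3/2::real)^k = (3/4)^k * 2^k" by (simp flip: power_mult_distrib)
  then have "\<epsilon> * ((3/2)^k * l c) / ?t = \<epsilon> * l c / c * (3/4)^k" using c by simp
  finally show ?thesis .
qed

text \<open>Summing the dyadic bounds, a geometric series with ratio \<open>3/4\<close>; condition (III) disposes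
  of the remaining tail.\<close>

lemma E_tail_le_truncated_second_moment:
  assumes tail_lim: "((\<lambda>c. E (\<lambda>\<omega>. max (\<bar>Y \<omega>\<bar> - c) 0)) \<longlongrightarrow> 0) at_top"
  shows "E (\<lambda>\<omega>. max (\<bar>Y \<omega>\<bar> - c) 0) \<le> ereal (4 * \<epsilon> * l c / c)"
proof (rule ereal_le_epsilon2)
  fix e :: real assume e: "0 < e"
  have geom: "(\<Sum>k<K. \<epsilon> * l c / c * (3/4)^k) \<le> 4 * \<epsilon> * l c / c" for K
  proof -
    have "(\<Sum>k<K. \<epsilon> * l c / c * (3/4)^k) = \<epsilon> * l c / c * (\<Sum>k<K. (3/4)^k)"
      by (simp add: sum_distrib_left)
    also have "\<dots> \<le> \<epsilon> * l c / c * 4"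
      using \<epsilon> truncated_second_moment(2)[OF Y] c by (intro mult_left_mono) (simp_all add: sum_gp_strict)
    finally show ?thesis by (simp add: mult_ac)
  qed
  have "\<forall>\<^sub>F x in at_top. E (\<lambda>\<omega>. max (\<bar>Y \<omega>\<bar> - x) 0) < ereal e"
    using order_tendstoD(2)[OF tail_lim] e by (simp add: zero_ereal_def)
  then obtain x0 where x0: "\<And>x. x \<ge> x0 \<Longrightarrow> E (\<lambda>\<omega>. max (\<bar>Y \<omega>\<bar> - x) 0) < ereal e"
    unfolding eventually_at_top_linorder by blast
  obtain K :: nat where "x0 / c < 2^K" using real_arch_pow[of 2 "x0/c"] by auto
  then have "x0 \<le> c * 2^K" using c by (simp add: field_simps)
  then have rest: "E (\<lambda>\<omega>. max (\<bar>Y \<omega>\<bar> - c * 2^K) 0) \<le> ereal e" using x0 by (simp add: order_less_imp_le)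
  have "E (\<lambda>\<omega>. max (\<bar>Y \<omega>\<bar> - c) 0)
      \<le> ereal (\<Sum>k<K. \<epsilon> * l c / c * (3/4)^k) + E (\<lambda>\<omega>. max (\<bar>Y \<omega>\<bar> - c * 2^K) 0)"
    by (rule E_tail_le_dyadic_sum[OF Y c dyadic_capV_le])
  also have "\<dots> \<le> ereal (4 * \<epsilon> * l c / c) + ereal e"
    using geom[of K] rest by (intro add_mono) auto
  finally show "E (\<lambda>\<omega>. max (\<bar>Y \<omega>\<bar> - c) 0) \<le> ereal (4 * \<epsilon> * l c / c) + ereal e" .
qed

end


lemma truncated_second_moment_le_tail:
  assumes Y: "Y \<in> H" and c: "0 \<le> c" and s: "0 < s"
  shows "ereal (truncated_second_moment Y s)
    \<le> ereal (2 * s) * E (\<lambda>\<omega>. max (\<bar>Y \<omega>\<bar> - c) 0) + ereal (4 * c\<^sup>2)"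
proof -
  let ?T = "\<lambda>\<omega>. max (\<bar>Y \<omega>\<bar> - c) 0"
  have pointwise: "min ((Y \<omega>)\<^sup>2) (s\<^sup>2) \<le> 2 * s * ?T \<omega> + 4 * c\<^sup>2" for \<omega>
  proof (cases "\<bar>Y \<omega>\<bar> \<le> 2 * c")
    case True
    then have "(Y \<omega>)\<^sup>2 \<le> (2*c)\<^sup>2" using c abs_le_square_iff[of "Y \<omega>" "2*c"] by simp
    then show ?thesis using s by (simp add: power_mult_distrib add_increasing min.coboundedI1)
  next
    case False
    have "min ((Y \<omega>)\<^sup>2) (s\<^sup>2) \<le> s * \<bar>Y \<omega>\<bar>"
    proof (cases "\<bar>Y \<omega>\<bar> \<le> s")
      case True
      then have "\<bar>Y \<omega>\<bar> * \<bar>Y \<omega>\<bar> \<le> s * \<bar>Y \<omega>\<bar>" by (intro mult_right_mono) auto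
      then show ?thesis by (simp add: power2_eq_square min.coboundedI1)
    next
      case False
      then have "s * s \<le> s * \<bar>Y \<omega>\<bar>" using s by (intro mult_left_mono) auto
      then show ?thesis by (simp add: power2_eq_square min.coboundedI2)
    qed
    also have "\<dots> \<le> s * (2 * ?T \<omega>)" using False c s by (intro mult_left_mono) auto
    finally show ?thesis by (simp add: mult_ac add_increasing2)
  qed
  have "E (\<lambda>\<omega>. min ((Y \<omega>)\<^sup>2) (s\<^sup>2)) \<le> E (\<lambda>\<omega>. 2 * s * ?T \<omega> + 4 * c\<^sup>2)"
    by (rule E_mono[OF min_square_in_H[OF Y] add_in_H[OF scale_in_H[OF tail_in_H[OF Y]] const_in_H] pointwise])
  also have "\<dots> \<le> E (\<lambda>\<omega>. 2 * s * ?T \<omega>) + ereal (4 * c\<^sup>2)"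
    by (rule E_add_const_le[OF scale_in_H[OF tail_in_H[OF Y]]])
  also have "E (\<lambda>\<omega>. 2 * s * ?T \<omega>) = ereal (2 * s) * E ?T"
    using E_pos_homogeneous[OF tail_in_H[OF Y], of "2 * s"] s by simp
  finally show ?thesis unfolding truncated_second_moment(1)[OF Y] .
qed

lemma truncated_second_moment_eventually_le:
  assumes Y: "Y \<in> H" and tail_lim: "((\<lambda>c. E (\<lambda>\<omega>. max (\<bar>Y \<omega>\<bar> - c) 0)) \<longlongrightarrow> 0) at_top"
    and q: "0 < q"
  shows "\<forall>\<^sub>F s in at_top. truncated_second_moment Y s \<le> q * s\<^sup>2"
proof -
  have "\<forall>\<^sub>F c in at_top. E (\<lambda>\<omega>. max (\<bar>Y \<omega>\<bar> - c) 0) < ereal 1"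
    using order_tendstoD(2)[OF tail_lim] by (simp add: zero_ereal_def)
  then obtain c where c: "0 \<le> c" "E (\<lambda>\<omega>. max (\<bar>Y \<omega>\<bar> - c) 0) \<le> ereal 1"
    unfolding eventually_at_top_linorder by (metis less_imp_le max.cobounded1 max.cobounded2)
  have "truncated_second_moment Y s \<le> q * s\<^sup>2" if s: "s \<ge> max 1 ((2 + 4 * c\<^sup>2) / q)" for s
  proof -
    have s1: "1 \<le> s" and "2 + 4 * c\<^sup>2 \<le> q * s" using s q by (auto simp: field_simps)
    then have quad: "4 * c\<^sup>2 + 2 * s \<le> q * s\<^sup>2"
      using mult_right_mono[of "2 + 4 * c\<^sup>2" "q * s" s] mult_left_mono[OF s1, of "4 * c\<^sup>2"]
      by (simp add: power2_eq_square algebra_simps)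
    have "ereal (truncated_second_moment Y s)
        \<le> ereal (2 * s) * E (\<lambda>\<omega>. max (\<bar>Y \<omega>\<bar> - c) 0) + ereal (4 * c\<^sup>2)"
      using s1 by (intro truncated_second_moment_le_tail[OF Y c(1)]) simp
    moreover have "ereal (2 * s) * E (\<lambda>\<omega>. max (\<bar>Y \<omega>\<bar> - c) 0) \<le> ereal (2 * s) * ereal 1"
      using c(2) s1 by (intro ereal_mult_left_mono) auto
    ultimately have "ereal (truncated_second_moment Y s) \<le> ereal (2 * s + 4 * c\<^sup>2)"
      by (metis add_right_mono order_trans plus_ereal.simps(1) times_ereal.simps(1) mult_1_right)
    then show ?thesis using quad by simp
  qed
  then show ?thesis unfolding eventually_at_top_linorder by blast
qed

lemma selfnorm_factor_in_H: "U \<in> H \<Longrightarrow> 0 \<le> c \<Longrightarrow> (\<lambda>\<omega>. selfnorm_factor c (U \<omega>)) \<in> H"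
  by (erule lipschitz_comp_in_H[where C="(c + c\<^sup>2) * exp (1/2)" and m=1])
    (use selfnorm_factor_lipschitz in simp)

lemma E_selfnorm_factor:
  assumes "U \<in> H" "0 \<le> c"
  shows "E (\<lambda>\<omega>. selfnorm_factor c (U \<omega>)) = ereal (real_of_ereal (E (\<lambda>\<omega>. selfnorm_factor c (U \<omega>))))"
    and "0 \<le> real_of_ereal (E (\<lambda>\<omega>. selfnorm_factor c (U \<omega>)))"
  using E_bounded[OF selfnorm_factor_in_H[OF assms], of 0 "exp (1/2)"]
    selfnorm_factor_pos[THEN less_imp_le] selfnorm_factor_le by auto

lemma E_selfnorm_factor_le:
  assumes Y: "Y \<in> H" and mean: "E Y \<le> 0" and a: "0 < a" "a \<le> 1" and c: "0 < c"
    and B: "E (\<lambda>\<omega>. max (\<bar>Y \<omega>\<bar> - a/(2*c)) 0) \<le> ereal B"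
  shows "real_of_ereal (E (\<lambda>\<omega>. selfnorm_factor c (Y \<omega>)))
    \<le> 1 + a*c\<^sup>2 * truncated_second_moment Y (a/c) + 2*c*B"
proof -
  let ?M = "\<lambda>\<omega>. min ((Y \<omega>)\<^sup>2) ((a/c)\<^sup>2)" and ?T = "\<lambda>\<omega>. max (\<bar>Y \<omega>\<bar> - a/(2*c)) 0"
  have MH: "?M \<in> H" and TH: "?T \<in> H" and cYH: "(\<lambda>\<omega>. c * Y \<omega>) \<in> H"
    by (intro min_square_in_H tail_in_H scale_in_H Y)+
  let ?S = "\<lambda>\<omega>. (a*c\<^sup>2) * ?M \<omega> + (2*c) * ?T \<omega>"
  have SH: "?S \<in> H" by (intro add_in_H scale_in_H MH TH)
  have RH: "(\<lambda>\<omega>. (c * Y \<omega> + ?S \<omega>) + 1) \<in> H" by (intro add_in_H const_in_H cYH SH)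
  have "selfnorm_factor c (Y \<omega>) \<le> (c * Y \<omega> + ?S \<omega>) + 1" for \<omega>
    using selfnorm_factor_le_linear[OF a c, of "Y \<omega>"] by (simp add: algebra_simps)
  then have "E (\<lambda>\<omega>. selfnorm_factor c (Y \<omega>)) \<le> E (\<lambda>\<omega>. (c * Y \<omega> + ?S \<omega>) + 1)"
    using c by (intro E_mono[OF selfnorm_factor_in_H[OF Y] RH]) auto
  also have "\<dots> \<le> (E (\<lambda>\<omega>. c * Y \<omega>) + E ?S) + ereal 1"
    by (intro order_trans[OF E_add_const_le] add_right_mono E_subadd add_in_H cYH SH)
  also have "E (\<lambda>\<omega>. c * Y \<omega>) \<le> 0"
    using E_pos_homogeneous[OF Y c] ereal_mult_left_mono[OF mean, of "ereal c"] c by simp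
  also have "E ?S \<le> E (\<lambda>\<omega>. (a*c\<^sup>2) * ?M \<omega>) + E (\<lambda>\<omega>. (2*c) * ?T \<omega>)"
    by (intro E_subadd scale_in_H MH TH)
  also have "E (\<lambda>\<omega>. (a*c\<^sup>2) * ?M \<omega>) = ereal (a*c\<^sup>2 * truncated_second_moment Y (a/c))"
    using E_pos_homogeneous[OF MH, of "a*c\<^sup>2"] a c truncated_second_moment(1)[OF Y, of "a/c"] by simp
  also have "E (\<lambda>\<omega>. (2*c) * ?T \<omega>) \<le> ereal (2*c*B)"
    using E_pos_homogeneous[OF TH, of "2*c"] c ereal_mult_left_mono[OF B, of "ereal (2*c)"] by simp
  finally have "E (\<lambda>\<omega>. selfnorm_factor c (Y \<omega>))
      \<le> ereal (1 + a*c\<^sup>2 * truncated_second_moment Y (a/c) + 2*c*B)"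
    by (simp add: add_mono add.commute add.left_commute)
  then show ?thesis using E_selfnorm_factor[OF Y] c by (metis ereal_less_eq(3) less_imp_le)
qed

end

section \<open>An exponential inequality on a geometric grid\<close>

lemma selfnorm_exponent_ge:
  fixes x b V S \<rho> :: real
  assumes x: "0 < x" and b: "0 < b" and bV: "b \<le> V" "V \<le> b * (1 + \<rho>)" and S: "x * V \<le> S"
  shows "x\<^sup>2 * (1 - \<rho>\<^sup>2) / 2 \<le> (x/b) * S - (x/b)\<^sup>2 * V\<^sup>2 / 2"
proof -
  define u where "u = V / b"
  have u: "1 \<le> u" "u \<le> 1 + \<rho>" using bV b by (simp_all add: u_def field_simps)
  have "(u - 1)\<^sup>2 \<le> \<rho>\<^sup>2" using u by (intro power_mono) auto
  then have "(1 - \<rho>\<^sup>2) / 2 \<le> u - u\<^sup>2/2" by (simp add: power2_diff field_simps)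
  then have "x\<^sup>2 * ((1 - \<rho>\<^sup>2) / 2) \<le> x\<^sup>2 * (u - u\<^sup>2/2)" by (rule mult_left_mono) simp
  also have "x\<^sup>2 * (u - u\<^sup>2/2) = (x/b) * (x * V) - (x/b)\<^sup>2 * V\<^sup>2 / 2"
    using b by (simp add: u_def power2_eq_square field_simps)
  also have "\<dots> \<le> (x/b) * S - (x/b)\<^sup>2 * V\<^sup>2 / 2"
    using mult_left_mono[OF S, of "x/b"] x b by simp
  finally show ?thesis by simp
qed

lemma exists_grid_bracket:
  fixes \<beta> V \<rho> :: real
  assumes "0 < \<beta>" "\<beta> \<le> V" "V \<le> \<beta> * (1+\<rho>)^N" "0 < \<rho>"
  shows "\<exists>k\<le>N. \<beta> * (1+\<rho>)^k \<le> V \<and> V \<le> \<beta> * (1+\<rho>)^k * (1+\<rho>)"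
proof -
  define P where "P k \<longleftrightarrow> V \<le> \<beta> * (1+\<rho>)^k * (1+\<rho>)" for k
  have "\<beta> * (1+\<rho>)^N \<le> \<beta> * (1+\<rho>)^N * (1+\<rho>)"
    using mult_left_mono[of 1 "1+\<rho>" "\<beta> * (1+\<rho>)^N"] assms by simp
  then have "P N" unfolding P_def by (rule order_trans[OF assms(3)])
  define k where "k = (LEAST k. P k)"
  have "P k" "k \<le> N" unfolding k_def by (auto intro: LeastI Least_le \<open>P N\<close>)
  moreover have "\<beta> * (1+\<rho>)^k \<le> V"
  proof (cases k)
    case (Suc j)
    then have "\<not> P j" unfolding k_def by (metis lessI not_less_Least)
    then show ?thesis unfolding P_def using Suc by (simp add: mult_ac)
  qed (use assms in simp)
  ultimately show ?thesis unfolding P_def by blast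
qed

lemma grid_exponent_witness:
  fixes x \<delta> B \<rho> V2 S :: real
  assumes x: "0 < x" and \<delta>: "0 < \<delta>" and B: "0 < B" and \<rho>: "0 < \<rho>"
    and N: "3 \<le> sqrt \<delta> * (1+\<rho>)^N" and V2: "\<delta> * B \<le> V2" "V2 \<le> 9 * B" and S: "x * sqrt V2 \<le> S"
  shows "\<exists>k\<le>N. x\<^sup>2 * (1 - \<rho>\<^sup>2) / 2
    \<le> (x / (sqrt (\<delta> * B) * (1+\<rho>)^k)) * S - (x / (sqrt (\<delta> * B) * (1+\<rho>)^k))\<^sup>2 * V2 / 2"
proof -
  let ?\<beta> = "sqrt (\<delta> * B)"
  have \<beta>: "0 < ?\<beta>" using \<delta> B by simp
  have "sqrt V2 \<le> sqrt (9 * B)" using V2(2) by (rule real_sqrt_le_mono)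
  also have "\<dots> \<le> ?\<beta> * (1+\<rho>)^N" using N B by (simp add: real_sqrt_mult mult_right_mono)
  finally obtain k where k: "k \<le> N" "?\<beta> * (1+\<rho>)^k \<le> sqrt V2" "sqrt V2 \<le> ?\<beta> * (1+\<rho>)^k * (1+\<rho>)"
    using exists_grid_bracket[OF \<beta> _ _ \<rho>] V2(1) by (meson real_sqrt_le_mono)
  moreover have "0 < ?\<beta> * (1+\<rho>)^k" using \<beta> \<rho> by simp
  moreover have "(sqrt V2)\<^sup>2 = V2" using V2(1) \<delta> B by (simp add: order_trans[OF _ V2(1)])
  ultimately show ?thesis using selfnorm_exponent_ge[OF x _ _ _ S] by metis
qed

lemma power_le_exp:
  fixes m y :: real assumes "0 \<le> m" "m \<le> 1 + y / real n" "0 < n"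
  shows "m ^ n \<le> exp y"
proof -
  have "m ^ n \<le> exp (y / real n) ^ n"
    using assms order_trans[OF assms(2) exp_ge_add_one_self] by (intro power_mono) auto
  also have "\<dots> = exp y" using assms(3) by (simp flip: exp_of_nat_mult)
  finally show ?thesis .
qed

context iid_sequence
begin

text \<open>Chebyshev's inequality for the products \<open>\<Prod>j=1..n. selfnorm_factor \<lambda>\<^sub>k (X j)\<close>,
  \<open>\<lambda>\<^sub>k = x / (\<surd>(\<delta> B) (1+\<rho>)\<^sup>k)\<close>, summed over the \<open>N+1\<close> shells of the grid: on the event, one of
  the products is at least \<open>exp (x\<^sup>2 (1-\<rho>\<^sup>2)/2)\<close>.\<close>

lemma capV_selfnormalized_le_grid:
  assumes n: "0 < n" and x: "0 < x" and B: "0 < B" and \<delta>: "0 < \<delta>" and \<rho>: "0 < \<rho>"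
    and N: "3 \<le> sqrt \<delta> * (1+\<rho>)^N"
    and mgf: "\<And>k. k \<le> N \<Longrightarrow>
      real_of_ereal (E (\<lambda>\<omega>. selfnorm_factor (x / (sqrt (\<delta>*B) * (1+\<rho>)^k)) (X0 \<omega>)))
        \<le> 1 + \<eta> * x\<^sup>2 / real n"
  shows "capV H E {\<omega>. (\<Sum>i=1..n. X i \<omega>) \<ge> x * sqrt (\<Sum>i=1..n. (X i \<omega>)\<^sup>2) \<and>
            \<delta> * B \<le> (\<Sum>i=1..n. (X i \<omega>)\<^sup>2) \<and> (\<Sum>i=1..n. (X i \<omega>)\<^sup>2) \<le> 9 * B}
         \<le> ereal (real (Suc N) * exp (- (x\<^sup>2 * (1 - \<rho>\<^sup>2) / 2) + \<eta> * x\<^sup>2))"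
    (is "capV H E ?A \<le> _")
proof -
  define \<beta> where "\<beta> = sqrt (\<delta>*B)"
  define lam where "lam k = x / (\<beta> * (1+\<rho>)^k)" for k
  define K where "K = x\<^sup>2 * (1 - \<rho>\<^sup>2) / 2"
  define \<xi> where "\<xi> k \<omega> = exp (- K) * (\<Prod>j=1..n. selfnorm_factor (lam k) (X j \<omega>))" for k \<omega>
  define m where "m k = real_of_ereal (E (\<lambda>\<omega>. selfnorm_factor (lam k) (X0 \<omega>)))" for k
  have \<beta>: "0 < \<beta>" using \<delta> B by (simp add: \<beta>_def)
  have lam: "0 < lam k" for k using x \<beta> \<rho> by (simp add: lam_def)
  have L: "0 \<le> (lam k + (lam k)\<^sup>2) * exp (1/2)" for k using lam[of k] by simp
  note factor = selfnorm_factor_pos[THEN less_imp_le] selfnorm_factor_le one_le_exp_iff[THEN iffD2]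
    L selfnorm_factor_lipschitz[OF less_imp_le[OF lam]]
  have \<xi>H: "\<xi> k \<in> H" for k
    unfolding \<xi>_def by (intro scale_in_H prod_factor_in_H[OF factor]) (use lam in auto)
  have E\<xi>: "E (\<xi> k) = ereal (exp (- K) * m k ^ n)" for k
    using E_nonneg_scale[OF prod_factor_in_H E_prod_factor, OF factor factor] lam[of k]
    unfolding \<xi>_def m_def by auto
  have m_pow: "m k ^ n \<le> exp (\<eta> * x\<^sup>2)" if "k \<le> N" for k
    using mgf[OF that] n E_selfnorm_factor(2)[OF X0_in_H less_imp_le[OF lam]]
    by (intro power_le_exp) (auto simp: m_def lam_def \<beta>_def)
  have \<xi>_nonneg: "0 \<le> \<xi> k \<omega>" for k \<omega>
    unfolding \<xi>_def by (simp add: prod_selfnorm_factor)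
  have "indicator ?A \<omega> \<le> (\<Sum>k\<le>N. \<xi> k \<omega>)" for \<omega>
  proof (cases "\<omega> \<in> ?A")
    case True
    obtain k where k: "k \<le> N"
      "K \<le> lam k * (\<Sum>i=1..n. X i \<omega>) - (lam k)\<^sup>2 * (\<Sum>i=1..n. (X i \<omega>)\<^sup>2) / 2"
      using grid_exponent_witness[OF x \<delta> B \<rho> N] True unfolding K_def lam_def \<beta>_def by auto
    have "1 \<le> \<xi> k \<omega>"
      using k(2) by (simp add: \<xi>_def prod_selfnorm_factor sum_nonneg flip: exp_add)
    also have "\<dots> \<le> (\<Sum>k\<le>N. \<xi> k \<omega>)" using k(1) \<xi>_nonneg by (intro member_le_sum) auto
    finally show ?thesis using True by simp
  qed (simp add: \<xi>_nonneg sum_nonneg)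
  then have "capV H E ?A \<le> E (\<lambda>\<omega>. \<Sum>k\<le>N. \<xi> k \<omega>)"
    using E_sum_le \<xi>H by (intro capV_le_E) auto
  also have "\<dots> \<le> (\<Sum>k\<le>N. E (\<xi> k))" using E_sum_le \<xi>H by blast
  also have "\<dots> \<le> ereal (\<Sum>k\<le>N. exp (- K) * exp (\<eta> * x\<^sup>2))"
    unfolding E\<xi> sum_ereal by (intro ereal_less_eq(3)[THEN iffD2] sum_mono mult_left_mono m_pow) auto
  also have "\<dots> = ereal (real (Suc N) * exp (- K + \<eta> * x\<^sup>2))" by (simp add: mult_exp_exp)
  finally show ?thesis unfolding K_def .
qed

end

section \<open>Choice of the parameters\<close>

context sublinear_expectation
begin

lemma E_selfnorm_factor_le_rate:
  assumes Y: "Y \<in> H" and mean: "E Y \<le> 0" and a: "0 < a" "a \<le> 1" and e: "0 \<le> e"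
    and tail: "\<And>c. c \<ge> T \<Longrightarrow>
      E (\<lambda>\<omega>. max (\<bar>Y \<omega>\<bar> - c) 0) \<le> ereal (4 * e * truncated_second_moment Y c / c)"
    and lam: "0 < lam" "T \<le> a / (2*lam)" "a / lam \<le> z"
    and rate: "lam\<^sup>2 * truncated_second_moment Y z \<le> r"
    and small: "a \<le> \<eta> * \<delta> / 2" "e \<le> a * \<eta> * \<delta> / 32"
  shows "real_of_ereal (E (\<lambda>\<omega>. selfnorm_factor lam (Y \<omega>))) \<le> 1 + \<eta> * \<delta> * r"
proof -
  let ?l = "truncated_second_moment Y" and ?c = "a / (2*lam)"
  have c: "0 < ?c" "?c \<le> a / lam" using a lam by (simp_all add: field_simps)
  have lz: "0 \<le> ?l z" using truncated_second_moment(2)[OF Y] .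
  have l_le: "?l (a/lam) \<le> ?l z" "?l ?c \<le> ?l z"
    using truncated_second_moment_mono[OF Y] c a lam by (auto intro: less_imp_le)
  have r: "0 \<le> r" using rate lz by (meson order_trans zero_le_mult_iff zero_le_power2)
  have "lam\<^sup>2 * ?l (a/lam) \<le> r" "lam\<^sup>2 * ?l ?c \<le> r"
    using l_le rate by (meson mult_left_mono order_trans zero_le_power2)+
  then have first: "a * lam\<^sup>2 * ?l (a/lam) \<le> a * r"
    and second: "(16 * e / a) * (lam\<^sup>2 * ?l ?c) \<le> (16 * e / a) * r"
    using a e by (simp add: mult.assoc mult_left_mono, intro mult_left_mono) auto
  have "real_of_ereal (E (\<lambda>\<omega>. selfnorm_factor lam (Y \<omega>)))
      \<le> 1 + a * lam\<^sup>2 * ?l (a/lam) + 2 * lam * (4 * e * ?l ?c / ?c)"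
    by (rule E_selfnorm_factor_le[OF Y mean a lam(1) tail[OF lam(2)]])
  also have "2 * lam * (4 * e * ?l ?c / ?c) = (16 * e / a) * (lam\<^sup>2 * ?l ?c)"
    using a lam by (simp add: field_simps power2_eq_square)
  also have "1 + a * lam\<^sup>2 * ?l (a/lam) + (16 * e / a) * (lam\<^sup>2 * ?l ?c) \<le> 1 + a * r + (16 * e / a) * r"
    using first second by linarith
  also have "1 + a * r + (16 * e / a) * r \<le> 1 + \<eta> * \<delta> * r"
  proof -
    have "16 * e / a \<le> \<eta> * \<delta> / 2" using small(2) a by (simp add: field_simps)
    then have "a + 16 * e / a \<le> \<eta> * \<delta>" using small(1) by simp
    then have "(a + 16 * e / a) * r \<le> \<eta> * \<delta> * r" using r by (rule mult_right_mono)
    then show ?thesis by (simp add: distrib_right)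
  qed
  finally show ?thesis by simp
qed

end

lemma grid_scale_bounds:
  fixes x \<delta> B \<rho> a T z :: real
  assumes x: "0 < x" and \<delta>: "0 < \<delta>" "\<delta> \<le> 1" and B: "0 < B" and \<rho>: "0 < \<rho>" and k: "k \<le> N"
    and a: "0 < a" "a * (1+\<rho>)^N \<le> 1"
    and T: "2 * x * T / a \<le> sqrt (\<delta> * B)" and z: "sqrt B \<le> x * z"
  defines "lam \<equiv> x / (sqrt (\<delta> * B) * (1+\<rho>)^k)"
  shows "0 < lam" "T \<le> a / (2 * lam)" "a / lam \<le> z" "lam\<^sup>2 \<le> x\<^sup>2 / (\<delta> * B)"
proof -
  let ?b = "sqrt (\<delta> * B) * (1+\<rho>)^k"
  have pk: "1 \<le> (1+\<rho>)^k" "(1+\<rho>)^k \<le> (1+\<rho>)^N" using \<rho> k by (auto intro: power_increasing)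
  have sdB: "0 < sqrt (\<delta> * B)" using \<delta> B by simp
  have b: "sqrt (\<delta> * B) \<le> ?b" using pk sdB by simp
  then have b0: "0 < ?b" using sdB by linarith
  show "0 < lam" using x b0 by (simp add: lam_def)
  have "2 * x * T / a \<le> ?b" using T b by linarith
  then show "T \<le> a / (2 * lam)" using x a b0 by (simp add: lam_def field_simps)
  have "a * ?b \<le> a * (1+\<rho>)^N * sqrt (\<delta> * B)" using a pk sdB by (simp add: mult_left_mono)
  also have "\<dots> \<le> sqrt (\<delta> * B)" using a sdB by (simp add: mult_left_le_one_le)
  also have "\<dots> \<le> sqrt B" using \<delta> B by (simp add: mult_le_cancel_right1)
  finally show "a / lam \<le> z" using z x b0 by (simp add: lam_def field_simps)
  have "lam \<le> x / sqrt (\<delta> * B)" using x b sdB by (simp add: lam_def frac_le)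
  then have "lam\<^sup>2 \<le> (x / sqrt (\<delta> * B))\<^sup>2" using x b0 by (intro power_mono) (auto simp: lam_def)
  then show "lam\<^sup>2 \<le> x\<^sup>2 / (\<delta> * B)" using \<delta> B by (simp add: power_divide)
qed

lemma grid_count_absorbed:
  fixes x \<eta> \<eta>\<^sub>1 \<rho> :: real
  assumes "ln (real (Suc N)) \<le> \<eta>\<^sub>1 * x\<^sup>2" "\<rho>\<^sup>2 \<le> \<eta>\<^sub>1" "4 * \<eta>\<^sub>1 \<le> \<eta>"
  shows "real (Suc N) * exp (- (x\<^sup>2 * (1 - \<rho>\<^sup>2) / 2) + \<eta>\<^sub>1 * x\<^sup>2) \<le> exp (- x\<^sup>2 / 2 + \<eta> * x\<^sup>2)"
proof -
  have "\<rho>\<^sup>2 * x\<^sup>2 \<le> \<eta>\<^sub>1 * x\<^sup>2" "4 * (\<eta>\<^sub>1 * x\<^sup>2) \<le> \<eta> * x\<^sup>2"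
    using assms mult_right_mono[OF assms(3), of "x\<^sup>2"] by (simp_all add: mult_right_mono mult.assoc)
  moreover have "x\<^sup>2 * (1 - \<rho>\<^sup>2) = x\<^sup>2 - \<rho>\<^sup>2 * x\<^sup>2" by (simp add: algebra_simps)
  ultimately have "ln (real (Suc N)) + (- (x\<^sup>2 * (1 - \<rho>\<^sup>2) / 2) + \<eta>\<^sub>1 * x\<^sup>2) \<le> - x\<^sup>2 / 2 + \<eta> * x\<^sup>2"
    using assms(1) ln_ge_zero[of "real (Suc N)"] by linarith
  then have "exp (ln (real (Suc N)) + (- (x\<^sup>2 * (1 - \<rho>\<^sup>2) / 2) + \<eta>\<^sub>1 * x\<^sup>2)) \<le> exp (- x\<^sup>2 / 2 + \<eta> * x\<^sup>2)"
    by simp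
  then show ?thesis by (simp add: exp_add)
qed


text \<open>\<open>\<rho> = min \<eta> 1 / 4\<close> is both the grid ratio and the loss in the exponent, \<open>N\<close>
  makes the grid cover \<open>[\<surd>(\<delta> B), 3 \<surd>B]\<close>, and \<open>a\<close>, \<open>e\<close> are then chosen so that the moment
  generating function of every grid point is at most \<open>1 + \<rho> x\<^sup>2/n\<close>.\<close>

lemma exists_grid_parameters:
  fixes \<delta> \<eta> :: real assumes \<delta>: "0 < \<delta>" and \<eta>: "0 < \<eta>"
  obtains \<rho> N a e where "0 < \<rho>" "\<rho>\<^sup>2 \<le> \<rho>" "4 * \<rho> \<le> \<eta>" "3 \<le> sqrt \<delta> * (1+\<rho>)^N"
    "0 < a" "a * (1+\<rho>)^N \<le> 1" "a \<le> \<rho> * \<delta> / 2" "0 < e" "e \<le> 1/6" "e \<le> a * \<rho> * \<delta> / 32"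
proof -
  define \<rho> where "\<rho> = min \<eta> 1 / 4"
  have \<rho>: "0 < \<rho>" "\<rho> \<le> 1" "4 * \<rho> \<le> \<eta>" using \<eta> by (auto simp: \<rho>_def)
  then have "\<rho>\<^sup>2 \<le> \<rho>" by (simp add: power2_eq_square mult_left_le_one_le)
  moreover obtain N where "3 / sqrt \<delta> < (1+\<rho>)^N" using real_arch_pow[of "1+\<rho>" "3 / sqrt \<delta>"] \<rho> by auto
  then have "3 \<le> sqrt \<delta> * (1+\<rho>)^N" using \<delta> by (simp add: field_simps)
  moreover define a where "a = min (1 / (1+\<rho>)^N) (\<rho> * \<delta> / 2)"
  then have "0 < a" "a * (1+\<rho>)^N \<le> 1" "a \<le> \<rho> * \<delta> / 2"
    using \<rho> \<delta> by (auto simp: min_def field_simps)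
  moreover define e where "e = min (1/6) (a * \<rho> * \<delta> / 32)"
  then have "0 < e" "e \<le> 1/6" "e \<le> a * \<rho> * \<delta> / 32" using \<open>0 < a\<close> \<rho> \<delta> by auto
  ultimately show ?thesis using that \<rho> by blast
qed

context iid_sequence
begin

lemma capV_selfnormalized_le_exp:
  assumes mean: "E X0 \<le> 0" and e: "0 \<le> e" "e \<le> a * \<rho> * \<delta> / 32"
    and tail: "\<And>c. c \<ge> T \<Longrightarrow>
      E (\<lambda>\<omega>. max (\<bar>X0 \<omega>\<bar> - c) 0) \<le> ereal (4 * e * truncated_second_moment X0 c / c)"
    and \<rho>: "0 < \<rho>" and N: "3 \<le> sqrt \<delta> * (1+\<rho>)^N" and \<delta>: "0 < \<delta>" "\<delta> \<le> 1"
    and a: "0 < a" "a * (1+\<rho>)^N \<le> 1" "a \<le> \<rho> * \<delta> / 2"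
    and T_pos: "0 < T" and n: "0 < n" and x: "0 < x" and L0: "0 < L0" and z: "0 \<le> z"
    and lz: "L0 \<le> truncated_second_moment X0 z" "truncated_second_moment X0 z \<le> x\<^sup>2 / real n * z\<^sup>2"
    and x_small: "x\<^sup>2 \<le> \<delta> * L0 * a\<^sup>2 / (4 * T\<^sup>2) * real n"
  shows "capV H E {\<omega>. (\<Sum>i=1..n. X i \<omega>) \<ge> x * sqrt (\<Sum>i=1..n. (X i \<omega>)\<^sup>2) \<and>
            \<delta> * (real n * truncated_second_moment X0 z) \<le> (\<Sum>i=1..n. (X i \<omega>)\<^sup>2) \<and>
            (\<Sum>i=1..n. (X i \<omega>)\<^sup>2) \<le> 9 * (real n * truncated_second_moment X0 z)}
         \<le> ereal (real (Suc N) * exp (- (x\<^sup>2 * (1 - \<rho>\<^sup>2) / 2) + \<rho> * x\<^sup>2))"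
proof -
  let ?B = "real n * truncated_second_moment X0 z"
  have lz_pos: "0 < truncated_second_moment X0 z" using L0 lz(1) by linarith
  then have B: "0 < ?B" using n by simp
  have sqrt_B: "sqrt ?B \<le> x * z"
    using lz n x z by (intro real_le_lsqrt) (auto simp: field_simps power_mult_distrib)
  have T_le: "2 * x * T / a \<le> sqrt (\<delta> * ?B)"
  proof (rule real_le_rsqrt)
    have "(2 * x * T / a)\<^sup>2 \<le> \<delta> * L0 * real n"
      using x_small a T_pos by (simp add: power_mult_distrib power_divide field_simps)
    also have "\<dots> \<le> \<delta> * ?B" using mult_left_mono[OF lz(1), of "\<delta> * real n"] \<delta> by (simp add: mult_ac)
    finally show "(2 * x * T / a)\<^sup>2 \<le> \<delta> * ?B" .
  qed
  have "a * 1 \<le> a * (1+\<rho>)^N" using a(1) \<rho> by (intro mult_left_mono) auto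
  then have a1: "a \<le> 1" using a(2) by simp
  show ?thesis
  proof (rule capV_selfnormalized_le_grid[OF n x B \<delta>(1) \<rho> N])
    fix k assume k: "k \<le> N"
    note scale = grid_scale_bounds[OF x \<delta> B \<rho> k a(1,2) T_le sqrt_B]
    have rate: "(x / (sqrt (\<delta> * ?B) * (1+\<rho>)^k))\<^sup>2 * truncated_second_moment X0 z \<le> x\<^sup>2 / (\<delta> * real n)"
      using mult_right_mono[OF scale(4) less_imp_le[OF lz_pos]] lz_pos by (simp add: field_simps)
    show "real_of_ereal (E (\<lambda>\<omega>. selfnorm_factor (x / (sqrt (\<delta> * ?B) * (1+\<rho>)^k)) (X0 \<omega>)))
        \<le> 1 + \<rho> * x\<^sup>2 / real n"
      using E_selfnorm_factor_le_rate[OF X0_in_H mean a(1) a1 e(1) tail scale(1-3) rate a(3) e(2)] \<delta>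
      by simp
  qed
qed

lemma capV_selfnormalized_eventually_le:
  fixes xs z :: "nat \<Rightarrow> real" and \<delta> \<eta> L0 :: real
  assumes mean: "E X0 \<le> 0"
    and capV_tail: "\<And>e. e > 0 \<Longrightarrow> \<forall>\<^sub>F x in at_top.
      capV H E {\<omega>. \<bar>X0 \<omega>\<bar> \<ge> x} \<le> ereal (e * truncated_second_moment X0 x / x\<^sup>2)"
    and tail_lim: "((\<lambda>c. E (\<lambda>\<omega>. max (\<bar>X0 \<omega>\<bar> - c) 0)) \<longlongrightarrow> 0) at_top"
    and xs_lim: "filterlim xs at_top sequentially"
    and xs_small: "\<And>c. c > 0 \<Longrightarrow> \<forall>\<^sub>F n in sequentially. (xs n)\<^sup>2 \<le> c * real n"
    and L0: "0 < L0"
    and z_props: "\<And>n. 0 < n \<Longrightarrow> 0 < xs n \<Longrightarrow> 0 \<le> z n \<and> L0 \<le> truncated_second_moment X0 (z n) \<and>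
      truncated_second_moment X0 (z n) \<le> (xs n)\<^sup>2 / real n * (z n)\<^sup>2"
    and \<delta>: "0 < \<delta>" "\<delta> \<le> 1" and \<eta>: "0 < \<eta>"
  shows "\<forall>\<^sub>F n in sequentially.
    capV H E {\<omega>. (\<Sum>i=1..n. X i \<omega>) \<ge> xs n * sqrt (\<Sum>i=1..n. (X i \<omega>)\<^sup>2) \<and>
      \<delta> * (real n * truncated_second_moment X0 (z n)) \<le> (\<Sum>i=1..n. (X i \<omega>)\<^sup>2) \<and>
      (\<Sum>i=1..n. (X i \<omega>)\<^sup>2) \<le> 9 * (real n * truncated_second_moment X0 (z n))}
    \<le> ereal (exp (- (xs n)\<^sup>2 / 2 + \<eta> * (xs n)\<^sup>2))"
proof -
  obtain \<rho> N a e where \<rho>: "0 < \<rho>" "\<rho>\<^sup>2 \<le> \<rho>" "4 * \<rho> \<le> \<eta>" and N: "3 \<le> sqrt \<delta> * (1+\<rho>)^N"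
    and a: "0 < a" "a * (1+\<rho>)^N \<le> 1" "a \<le> \<rho> * \<delta> / 2"
    and e: "0 < e" "e \<le> 1/6" "e \<le> a * \<rho> * \<delta> / 32"
    using exists_grid_parameters[OF \<delta>(1) \<eta>] by blast
  obtain T1 where T1: "\<And>x. x \<ge> T1 \<Longrightarrow>
      capV H E {\<omega>. \<bar>X0 \<omega>\<bar> \<ge> x} \<le> ereal (e * truncated_second_moment X0 x / x\<^sup>2)"
    using capV_tail[OF e(1)] unfolding eventually_at_top_linorder by blast
  define T where "T = max T1 1"
  have T_pos: "0 < T" and T1_le: "T1 \<le> T" by (simp_all add: T_def)
  have tail: "E (\<lambda>\<omega>. max (\<bar>X0 \<omega>\<bar> - c) 0) \<le> ereal (4 * e * truncated_second_moment X0 c / c)"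
    if "c \<ge> T" for c
    using E_tail_le_truncated_second_moment[OF X0_in_H e(1,2) _ _ tail_lim] T_pos T1_le T1 that by auto
  define K where "K = sqrt (ln (real (Suc N)) / \<rho>)"
  have "\<forall>\<^sub>F n in sequentially. 0 < n \<and> 0 < xs n \<and> K \<le> xs n \<and> (xs n)\<^sup>2 \<le> \<delta> * L0 * a\<^sup>2 / (4 * T\<^sup>2) * real n"
  proof (intro eventually_conj)
    show "\<forall>\<^sub>F n in sequentially. 0 < xs n" using xs_lim unfolding filterlim_at_top_dense by blast
    show "\<forall>\<^sub>F n in sequentially. K \<le> xs n" using xs_lim unfolding filterlim_at_top by blast
    show "\<forall>\<^sub>F n in sequentially. (xs n)\<^sup>2 \<le> \<delta> * L0 * a\<^sup>2 / (4 * T\<^sup>2) * real n"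
      using \<delta> L0 a T_pos by (intro xs_small) simp
  qed (rule eventually_gt_at_top)
  then show ?thesis
  proof (rule eventually_mono, elim conjE)
    fix n :: nat assume n: "0 < n" and x: "0 < xs n" and xK: "K \<le> xs n"
      and x_small: "(xs n)\<^sup>2 \<le> \<delta> * L0 * a\<^sup>2 / (4 * T\<^sup>2) * real n"
    let ?x = "xs n" and ?lz = "truncated_second_moment X0 (z n)"
    have "ln (real (Suc N)) / \<rho> = K\<^sup>2" using \<rho>(1) ln_ge_zero[of "real (Suc N)"] by (simp add: K_def)
    also have "\<dots> \<le> ?x\<^sup>2" using xK by (intro power_mono) (simp_all add: K_def \<rho>(1) less_imp_le)
    finally have "ln (real (Suc N)) \<le> \<rho> * ?x\<^sup>2" using \<rho>(1) by (simp add: field_simps)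
    then have absorb: "real (Suc N) * exp (- (?x\<^sup>2 * (1 - \<rho>\<^sup>2) / 2) + \<rho> * ?x\<^sup>2)
        \<le> exp (- ?x\<^sup>2 / 2 + \<eta> * ?x\<^sup>2)"
      using \<rho>(2,3) by (intro grid_count_absorbed)
    have zn: "0 \<le> z n" "L0 \<le> ?lz" "?lz \<le> ?x\<^sup>2 / real n * (z n)\<^sup>2" using z_props[OF n x] by auto
    have "capV H E {\<omega>. (\<Sum>i=1..n. X i \<omega>) \<ge> ?x * sqrt (\<Sum>i=1..n. (X i \<omega>)\<^sup>2) \<and>
        \<delta> * (real n * ?lz) \<le> (\<Sum>i=1..n. (X i \<omega>)\<^sup>2) \<and> (\<Sum>i=1..n. (X i \<omega>)\<^sup>2) \<le> 9 * (real n * ?lz)}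
      \<le> ereal (real (Suc N) * exp (- (?x\<^sup>2 * (1 - \<rho>\<^sup>2) / 2) + \<rho> * ?x\<^sup>2))"
      by (rule capV_selfnormalized_le_exp[OF mean less_imp_le[OF e(1)] e(3) tail \<rho>(1)
          N \<delta> a T_pos n x L0 zn x_small])
    then show "capV H E {\<omega>. (\<Sum>i=1..n. X i \<omega>) \<ge> ?x * sqrt (\<Sum>i=1..n. (X i \<omega>)\<^sup>2) \<and>
        \<delta> * (real n * ?lz) \<le> (\<Sum>i=1..n. (X i \<omega>)\<^sup>2) \<and> (\<Sum>i=1..n. (X i \<omega>)\<^sup>2) \<le> 9 * (real n * ?lz)}
      \<le> ereal (exp (- ?x\<^sup>2 / 2 + \<eta> * ?x\<^sup>2))" using absorb by (meson ereal_less_eq(3) order_trans)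
  qed
qed

end

lemma exists_littleo_of_eventually:
  fixes R :: "real \<Rightarrow> nat \<Rightarrow> bool" and x :: "nat \<Rightarrow> real"
  assumes mono: "\<And>w w' n. R w n \<Longrightarrow> w \<le> w' \<Longrightarrow> R w' n"
    and ev: "\<And>\<eta>. 0 < \<eta> \<Longrightarrow> \<forall>\<^sub>F n in sequentially. R (\<eta> * (x n)\<^sup>2) n"
  shows "\<exists>g. g \<in> o(\<lambda>n. (x n)\<^sup>2) \<and> (\<forall>\<^sub>F n in sequentially. R (g n) n)"
proof -
  define Z where "Z n = {\<eta>. 0 < \<eta> \<and> R (\<eta> * (x n)\<^sup>2) n}" for n
  define g where "g n = (Inf (Z n) + 1 / (real n + 1)) * (x n)\<^sup>2" for n
  have bdd: "bdd_below (Z n)" for n unfolding Z_def by (rule bdd_belowI[of _ 0]) auto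
  have Inf_le: "0 \<le> Inf (Z n) \<and> Inf (Z n) \<le> \<eta>" if "0 < \<eta>" "R (\<eta> * (x n)\<^sup>2) n" for n \<eta>
  proof -
    have "\<eta> \<in> Z n" using that by (simp add: Z_def)
    then have "Inf (Z n) \<le> \<eta>" by (rule cInf_lower[OF _ bdd])
    moreover have "0 \<le> Inf (Z n)" using \<open>\<eta> \<in> Z n\<close> by (intro cInf_greatest) (auto simp: Z_def)
    ultimately show ?thesis by simp
  qed
  have "R (g n) n" if "R (1 * (x n)\<^sup>2) n" for n
  proof -
    have ne: "Z n \<noteq> {}" using that unfolding Z_def by (metis mem_Collect_eq zero_less_one empty_iff)
    obtain \<eta> where \<eta>: "\<eta> \<in> Z n" "\<eta> < Inf (Z n) + 1 / (real n + 1)"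
      using cInf_less_iff[OF ne bdd, of "Inf (Z n) + 1 / (real n + 1)"] by auto
    have "\<eta> * (x n)\<^sup>2 \<le> g n" unfolding g_def using \<eta>(2) by (intro mult_right_mono) auto
    then show ?thesis using mono \<eta>(1) unfolding Z_def by blast
  qed
  then have "\<forall>\<^sub>F n in sequentially. R (g n) n" using ev[of 1] by (auto elim: eventually_mono)
  moreover have "g \<in> o(\<lambda>n. (x n)\<^sup>2)"
  proof (rule landau_o.smallI)
    fix c :: real assume c: "0 < c"
    have "\<forall>\<^sub>F n in sequentially. 1 / (real n + 1) \<le> c/2"
      using c by (intro eventually_sequentiallyI[of "nat \<lceil>2 / c\<rceil>"]) (auto simp: field_simps)
    moreover have "\<forall>\<^sub>F n in sequentially. R (c/2 * (x n)\<^sup>2) n" using c by (intro ev) simp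
    ultimately show "\<forall>\<^sub>F n in sequentially. norm (g n) \<le> c * norm ((x n)\<^sup>2)"
    proof eventually_elim
      case (elim n)
      then have "0 \<le> Inf (Z n) + 1 / (real n + 1)" "Inf (Z n) + 1 / (real n + 1) \<le> c"
        using Inf_le[of "c/2" n] c by (auto intro: add_nonneg_nonneg)
      then show ?case unfolding g_def by (simp add: mult_right_mono)
    qed
  qed
  ultimately show ?thesis by blast
qed

lemma square_le_of_littleo_sqrt:
  fixes xs :: "nat \<Rightarrow> real"
  assumes "xs \<in> o(\<lambda>n. sqrt (real n))" and c: "0 < c"
  shows "\<forall>\<^sub>F n in sequentially. (xs n)\<^sup>2 \<le> c * real n"
proof -
  have "\<forall>\<^sub>F n in sequentially. norm (xs n) \<le> sqrt c * norm (sqrt (real n))"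
    using landau_o.smallD[OF assms(1), of "sqrt c"] c by simp
  then show ?thesis
  proof (rule eventually_mono)
    fix n assume "norm (xs n) \<le> sqrt c * norm (sqrt (real n))"
    then have "\<bar>xs n\<bar>\<^sup>2 \<le> (sqrt c * sqrt (real n))\<^sup>2" by (intro power_mono) auto
    then show "(xs n)\<^sup>2 \<le> c * real n" using c by (simp add: power_mult_distrib)
  qed
qed

context sublinear_expectation
begin

text \<open>The infimum defining the paper's \<open>z\<^sub>n\<close> is attained, since \<open>truncated_second_moment Y\<close> is
  continuous and condition (III) makes the level set nonempty.\<close>

lemma Inf_truncated_second_moment_level:
  assumes Y: "Y \<in> H" and tail_lim: "((\<lambda>c. E (\<lambda>\<omega>. max (\<bar>Y \<omega>\<bar> - c) 0)) \<longlongrightarrow> 0) at_top"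
    and b: "0 < b" and q: "0 < q"
  defines "s \<equiv> Inf {s. s \<ge> b \<and> truncated_second_moment Y s / s\<^sup>2 \<le> q}"
  shows "b \<le> s" "truncated_second_moment Y s \<le> q * s\<^sup>2"
    and "\<And>x. 0 \<le> x \<Longrightarrow> x \<le> b \<Longrightarrow> truncated_second_moment Y x \<le> truncated_second_moment Y s"
proof -
  let ?Z = "{s. b \<le> s \<and> truncated_second_moment Y s \<le> q * s\<^sup>2}"
  have eq: "{s. s \<ge> b \<and> truncated_second_moment Y s / s\<^sup>2 \<le> q} = ?Z"
    using b by (auto simp: pos_divide_le_eq)
  obtain S where "\<And>s. s \<ge> S \<Longrightarrow> truncated_second_moment Y s \<le> q * s\<^sup>2"
    using truncated_second_moment_eventually_le[OF Y tail_lim q] unfolding eventually_at_top_linorder by blast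
  then have "max S b \<in> ?Z" by simp
  then have "?Z \<noteq> {}" by blast
  moreover have "closed ?Z"
    using continuous_truncated_second_moment[OF Y]
    by (intro closed_Collect_conj closed_Collect_le) (auto intro!: continuous_intros)
  moreover have "bdd_below ?Z" by (rule bdd_belowI[of _ b]) simp
  ultimately have "s \<in> ?Z" unfolding s_def eq by (intro closed_contains_Inf)
  then show "b \<le> s" "truncated_second_moment Y s \<le> q * s\<^sup>2" by auto
  then show "\<And>x. 0 \<le> x \<Longrightarrow> x \<le> b \<Longrightarrow> truncated_second_moment Y x \<le> truncated_second_moment Y s"
    by (meson order_trans truncated_second_moment_mono[OF Y])
qed

end

context iid_sequence
begin

lemma selfnormalized_deviation_bound:
  fixes xs z :: "nat \<Rightarrow> real" and \<delta> L0 :: real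
  assumes mean: "E X0 \<le> 0"
    and capV_tail: "\<And>e. e > 0 \<Longrightarrow> \<forall>\<^sub>F x in at_top.
      capV H E {\<omega>. \<bar>X0 \<omega>\<bar> \<ge> x} \<le> ereal (e * truncated_second_moment X0 x / x\<^sup>2)"
    and tail_lim: "((\<lambda>c. E (\<lambda>\<omega>. max (\<bar>X0 \<omega>\<bar> - c) 0)) \<longlongrightarrow> 0) at_top"
    and xs_lim: "filterlim xs at_top sequentially" and xs_small: "xs \<in> o(\<lambda>n. sqrt (real n))"
    and L0: "0 < L0"
    and z_props: "\<And>n. 0 < n \<Longrightarrow> 0 < xs n \<Longrightarrow> 0 \<le> z n \<and> L0 \<le> truncated_second_moment X0 (z n) \<and>
      truncated_second_moment X0 (z n) \<le> (xs n)\<^sup>2 / real n * (z n)\<^sup>2"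
    and \<delta>: "0 < \<delta>" "\<delta> \<le> 1"
  shows "\<exists>g. g \<in> o(\<lambda>n. (xs n)\<^sup>2) \<and> (\<forall>\<^sub>F n in sequentially.
    capV H E {\<omega>. (\<Sum>i=1..n. X i \<omega>) \<ge> xs n * sqrt (\<Sum>i=1..n. (X i \<omega>)\<^sup>2) \<and>
      \<delta> * real n * truncated_second_moment X0 (z n) \<le> (\<Sum>i=1..n. (X i \<omega>)\<^sup>2) \<and>
      (\<Sum>i=1..n. (X i \<omega>)\<^sup>2) \<le> 9 * real n * truncated_second_moment X0 (z n)}
    \<le> ereal (exp (- (xs n)\<^sup>2 / 2 + g n)))"
proof -
  define A where "A n = {\<omega>. (\<Sum>i=1..n. X i \<omega>) \<ge> xs n * sqrt (\<Sum>i=1..n. (X i \<omega>)\<^sup>2) \<and>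
      \<delta> * real n * truncated_second_moment X0 (z n) \<le> (\<Sum>i=1..n. (X i \<omega>)\<^sup>2) \<and>
      (\<Sum>i=1..n. (X i \<omega>)\<^sup>2) \<le> 9 * real n * truncated_second_moment X0 (z n)}" for n
  have "\<exists>g. g \<in> o(\<lambda>n. (xs n)\<^sup>2) \<and>
      (\<forall>\<^sub>F n in sequentially. capV H E (A n) \<le> ereal (exp (- (xs n)\<^sup>2 / 2 + g n)))"
  proof (rule exists_littleo_of_eventually)
    fix w w' :: real and n :: nat
    assume "capV H E (A n) \<le> ereal (exp (- (xs n)\<^sup>2 / 2 + w))" "w \<le> w'"
    then show "capV H E (A n) \<le> ereal (exp (- (xs n)\<^sup>2 / 2 + w'))" by (simp add: order_trans)
  next
    fix \<eta> :: real assume "0 < \<eta>"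
    from capV_selfnormalized_eventually_le[OF mean capV_tail tail_lim xs_lim
        square_le_of_littleo_sqrt[OF xs_small] L0 z_props \<delta> this]
    show "\<forall>\<^sub>F n in sequentially. capV H E (A n) \<le> ereal (exp (- (xs n)\<^sup>2 / 2 + \<eta> * (xs n)\<^sup>2))"
      by (simp add: A_def mult.assoc)
  qed
  then show ?thesis unfolding A_def .
qed

end

theorem proposition4p2:
  fixes H :: "('w \<Rightarrow> real) set" and E :: "('w \<Rightarrow> real) \<Rightarrow> ereal"
    and X0 :: "'w \<Rightarrow> real" and X :: "nat \<Rightarrow> 'w \<Rightarrow> real" and xs :: "nat \<Rightarrow> real"
    and l lc :: "real \<Rightarrow> real" and b0 :: real and z :: "nat \<Rightarrow> real" and \<delta> :: real
  assumes space: "sublinear_expectation_space H E"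
    and X0H: "X0 \<in> H" and XH: "\<And>n. n \<ge> 1 \<Longrightarrow> X n \<in> H"
    and indep: "indep_seq H E X"
    and distr: "\<And>n. n \<ge> 1 \<Longrightarrow> ident_distr E (X n) X0"
    and mean0: "E X0 = 0" "lowerE E X0 = 0"
    and l_def: "\<And>x. l x = real_of_ereal (E (\<lambda>\<omega>. min ((X0 \<omega>)\<^sup>2) (x\<^sup>2)))"
    and lc_def: "\<And>x. lc x = real_of_ereal (lowerE E (\<lambda>\<omega>. min ((X0 \<omega>)\<^sup>2) (x\<^sup>2)))"
    and I: "\<And>e. e > 0 \<Longrightarrow>
             \<forall>\<^sub>F x in at_top. capV H E {\<omega>. \<bar>X0 \<omega>\<bar> \<ge> x} \<le> ereal (e * l x / x\<^sup>2)"
    and II: "\<exists>C. \<forall>\<^sub>F x in at_top. lc x > 0 \<and> l x / lc x \<le> C"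
    and III: "((\<lambda>c. E (\<lambda>\<omega>. max (\<bar>X0 \<omega>\<bar> - c) 0)) \<longlongrightarrow> 0) at_top"
    and IV: "filterlim xs at_top sequentially" "xs \<in> o(\<lambda>n. sqrt (real n))"
    and b0_def: "b0 = Inf {x. x \<ge> 0 \<and> l x > 0}"
    and z_def: "\<And>n. z n = Inf {s. s \<ge> b0 + 1 \<and> l s / s\<^sup>2 \<le> (xs n)\<^sup>2 / real n}"
    and \<delta>: "0 < \<delta>" "\<delta> < 1"
  shows "\<exists>g :: nat \<Rightarrow> real. g \<in> o(\<lambda>n. (xs n)\<^sup>2) \<and>
    (\<forall>\<^sub>F n in sequentially.
       capV H E {\<omega>. (\<Sum>i=1..n. X i \<omega>) \<ge> xs n * sqrt (\<Sum>i=1..n. (X i \<omega>)\<^sup>2) \<and>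
                   \<delta> * real n * l (z n) \<le> (\<Sum>i=1..n. (X i \<omega>)\<^sup>2) \<and>
                   (\<Sum>i=1..n. (X i \<omega>)\<^sup>2) \<le> 9 * real n * l (z n)}
       \<le> ereal (exp (- (xs n)\<^sup>2 / 2 + g n)))"
proof -
  interpret iid_sequence H E X0 X using space X0H XH indep distr by unfold_locales auto
  have l_eq: "l = truncated_second_moment X0" by (simp add: fun_eq_iff l_def truncated_second_moment_def)
  obtain x1 where "0 \<le> x1" "0 < lc x1"
    using II unfolding eventually_at_top_linorder by (metis max.cobounded1 max.cobounded2 order_trans)
  moreover have "lc x1 \<le> l x1" unfolding lc_def l_def
    by (rule lowerE_le_E[OF min_square_in_H[OF X0H], where a=0 and b="x1\<^sup>2"]) auto
  ultimately have "{x. x \<ge> 0 \<and> l x > 0} \<noteq> {}" by force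
  moreover have "bdd_below {x. x \<ge> 0 \<and> l x > 0}" by (rule bdd_belowI[of _ 0]) simp
  ultimately obtain x0 where x0: "0 \<le> x0" "x0 < b0 + 1" "0 < l x0"
    using cInf_less_iff[of "{x. x \<ge> 0 \<and> l x > 0}" "b0 + 1"] unfolding b0_def by auto
  then have b0: "0 < b0 + 1" by linarith
  have z_props: "0 \<le> z n \<and> l x0 \<le> l (z n) \<and> l (z n) \<le> (xs n)\<^sup>2 / real n * (z n)\<^sup>2"
    if "0 < n" "0 < xs n" for n
    using Inf_truncated_second_moment_level[OF X0H III b0, of "(xs n)\<^sup>2 / real n"] x0 b0 that
    unfolding z_def l_eq by (auto simp: mult.commute)
  show ?thesis
    using selfnormalized_deviation_bound[OF _ I[unfolded l_eq] III IV x0(3)[unfolded l_eq]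
        z_props[unfolded l_eq] \<delta>(1) less_imp_le[OF \<delta>(2)]] mean0(1)
    unfolding l_eq by simp
qed

end
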